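(* Let $P$ be a Poisson bracket on $\mathbb{R}^n$. Every star-product on $(\mathbb{R}^n,P)$ is equivalent to a star-product on $(\mathbb{R}^n,P)$ whose associated sun-product coincides with the usual product on $\mathsf{Pol}$, i.e. whose sun-product cochains satisfy $\rho_r=0$ for all $r\ge1$.
   Context: $\mathsf{N}=C^\infty(\mathbb{R}^n)$, coordinates $x_1,\dots,x_n$, $\mathsf{Pol}=\mathbb{R}[x_1,\dots,x_n]$. A (differential) star-product on $(\mathbb{R}^n,P)$ is a bilinear map $f\ast_\nu g=\sum_{r\ge0}\nu^rC_r(f,g)$ from $\mathsf{N}\times\mathsf{N}$ to $\mathsf{N}[[\nu]]$, extended $\mathbb{R}[[\nu]]$-bilinearly, where the $C_r$ are bidifferential operators with: $C_0(f,g)=fg$; $C_r(c,f)=C_r(f,c)=0$ for $r\ge1$ and constants $c$; associativity $\sum_{s+t=r}C_s(C_t(f,g),h)=\sum_{s+t=r}C_s(f,C_t(g,h))$; and $C_1(f,g)-C_1(g,f)=2P(f,g)$. Two star-products $\ast_\nu,\ast_\nu'$ are equivalent if there is $T=I+\sum_{r\ge1}\nu^rT_r$ with $T_r$ differential operators on $\mathsf{N}$ vanishing on constants such that $T(f\ast_\nu g)=T(f)\ast_\nu'T(g)$ for all $f,g\in\mathsf{N}[[\nu]]$. The sun-product cochains $\rho_r:\mathsf{Pol}\to\mathsf{N}$ of $\ast_\nu$ are the linear maps determined by $\rho(1)=1$ and $\rho(x_{i_1}\cdots x_{i_k})=\frac1{k!}\sum_{\sigma\in S_k}x_{i_{\sigma(1)}}\ast_\nu\cdots\ast_\nu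 x_{i_{\sigma(k)}}=\sum_{r\ge0}\nu^r\rho_r(x_{i_1}\cdots x_{i_k})$; the associated sun-product is $f\odot_\nu g=\rho(\pi(fg))$ with $\pi$ taking the $\nu^0$-coefficient. *)

theory Defs
  imports "HOL-Analysis.Analysis" "HOL-Combinatorics.Permutations"
begin

type_synonym 'n fn = "real^'n \<Rightarrow> real"

definition partial :: "'n::finite \<Rightarrow> 'n fn \<Rightarrow> 'n fn" where
  "partial i f = (\<lambda>x. deriv (\<lambda>t. f (x + t *\<^sub>R axis i 1)) 0)"

fun pderivs :: "'n::finite list \<Rightarrow> 'n fn \<Rightarrow> 'n fn" where
  "pderivs [] f = f"
| "pderivs (i # is) f = partial i (pderivs is f)"

definition smooth :: "'n::finite fn \<Rightarrow> bool" where
  "smooth f \<longleftrightarrow> (\<forall>is x. pderivs is f differentiable (at x))"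

definition idx_lists :: "nat \<Rightarrow> 'n::finite list set" where
  "idx_lists k = {\<alpha>. length \<alpha> \<le> k}"

definition diff_op :: "('n::finite fn \<Rightarrow> 'n fn) \<Rightarrow> bool" where
  "diff_op D \<longleftrightarrow> (\<exists>k a. (\<forall>\<alpha>. smooth (a \<alpha>)) \<and>
     (\<forall>f. smooth f \<longrightarrow> D f = (\<lambda>x. \<Sum>\<alpha>\<in>idx_lists k. a \<alpha> x * pderivs \<alpha> f x)))"

definition bidiff_op :: "('n::finite fn \<Rightarrow> 'n fn \<Rightarrow> 'n fn) \<Rightarrow> bool" where
  "bidiff_op B \<longleftrightarrow> (\<exists>k a. (\<forall>\<alpha> \<beta>. smooth (a \<alpha> \<beta>)) \<and>
     (\<forall>f g. smooth f \<longrightarrow> smooth g \<longrightarrow>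
        B f g = (\<lambda>x. \<Sum>\<alpha>\<in>idx_lists k. \<Sum>\<beta>\<in>idx_lists k.
                        a \<alpha> \<beta> x * pderivs \<alpha> f x * pderivs \<beta> g x)))"

definition poisson_bracket :: "('n::finite fn \<Rightarrow> 'n fn \<Rightarrow> 'n fn) \<Rightarrow> bool" where
  "poisson_bracket P \<longleftrightarrow>
     (\<forall>f g. smooth f \<longrightarrow> smooth g \<longrightarrow> smooth (P f g)) \<and>
     (\<forall>a b f g h. smooth f \<longrightarrow> smooth g \<longrightarrow> smooth h \<longrightarrow>
        P (\<lambda>x. a * f x + b * g x) h = (\<lambda>x. a * P f h x + b * P g h x)) \<and>
     (\<forall>f g. smooth f \<longrightarrow> smooth g \<longrightarrow> P f g = (\<lambda>x. - P g f x)) \<and>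
     (\<forall>f g h. smooth f \<longrightarrow> smooth g \<longrightarrow> smooth h \<longrightarrow>
        (\<lambda>x. P f (P g h) x + P g (P h f) x + P h (P f g) x) = (\<lambda>x. 0)) \<and>
     (\<forall>f g h. smooth f \<longrightarrow> smooth g \<longrightarrow> smooth h \<longrightarrow>
        P f (\<lambda>x. g x * h x) = (\<lambda>x. P f g x * h x + g x * P f h x))"

text \<open>A differential star-product f * g = sum_r nu^r C_r(f,g) on (R^n, P).\<close>
definition star_product ::
  "('n::finite fn \<Rightarrow> 'n fn \<Rightarrow> 'n fn) \<Rightarrow> (nat \<Rightarrow> 'n fn \<Rightarrow> 'n fn \<Rightarrow> 'n fn) \<Rightarrow> bool" where
  "star_product P C \<longleftrightarrow>
     (\<forall>r. bidiff_op (C r)) \<and>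
     (\<forall>f g. smooth f \<longrightarrow> smooth g \<longrightarrow> C 0 f g = (\<lambda>x. f x * g x)) \<and>
     (\<forall>r c f. r \<ge> 1 \<longrightarrow> smooth f \<longrightarrow>
        C r (\<lambda>x. c) f = (\<lambda>x. 0) \<and> C r f (\<lambda>x. c) = (\<lambda>x. 0)) \<and>
     (\<forall>r f g h. smooth f \<longrightarrow> smooth g \<longrightarrow> smooth h \<longrightarrow>
        (\<lambda>x. \<Sum>s\<le>r. C s (C (r - s) f g) h x) = (\<lambda>x. \<Sum>s\<le>r. C s f (C (r - s) g h) x)) \<and>
     (\<forall>f g. smooth f \<longrightarrow> smooth g \<longrightarrow>
        (\<lambda>x. C 1 f g x - C 1 g f x) = (\<lambda>x. 2 * P f g x))"

text \<open>Equivalence of star-products via T = I + sum_{r>=1} nu^r T_r.  The identity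
  T(f * g) = T f *' T g for f,g in N[[nu]] is written coefficientwise for f,g in N,
  which is equivalent by R[[nu]]-(bi)linearity.\<close>
definition star_equiv ::
  "(nat \<Rightarrow> 'n::finite fn \<Rightarrow> 'n fn \<Rightarrow> 'n fn) \<Rightarrow> (nat \<Rightarrow> 'n fn \<Rightarrow> 'n fn \<Rightarrow> 'n fn) \<Rightarrow> bool" where
  "star_equiv C C' \<longleftrightarrow> (\<exists>T :: nat \<Rightarrow> 'n fn \<Rightarrow> 'n fn.
     (\<forall>f. smooth f \<longrightarrow> T 0 f = f) \<and>
     (\<forall>r c. r \<ge> 1 \<longrightarrow> diff_op (T r) \<and> T r (\<lambda>x. c) = (\<lambda>x. 0)) \<and>
     (\<forall>f g r. smooth f \<longrightarrow> smooth g \<longrightarrow>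
        (\<lambda>x. \<Sum>s\<le>r. T s (C (r - s) f g) x) =
        (\<lambda>x. \<Sum>a\<le>r. \<Sum>b\<le>r - a. C' a (T b f) (T (r - a - b) g) x)))"

definition ser_star ::
  "(nat \<Rightarrow> 'n::finite fn \<Rightarrow> 'n fn \<Rightarrow> 'n fn) \<Rightarrow> (nat \<Rightarrow> 'n fn) \<Rightarrow> (nat \<Rightarrow> 'n fn) \<Rightarrow> nat \<Rightarrow> 'n fn" where
  "ser_star C F G r = (\<lambda>x. \<Sum>s\<le>r. \<Sum>t\<le>r - s. C s (F t) (G (r - s - t)) x)"

definition const_ser :: "'n::finite fn \<Rightarrow> nat \<Rightarrow> 'n fn" where
  "const_ser f r = (if r = 0 then f else (\<lambda>x. 0))"

definition coord :: "'n::finite \<Rightarrow> 'n fn" where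
  "coord i = (\<lambda>x. x $ i)"

fun star_list :: "(nat \<Rightarrow> 'n::finite fn \<Rightarrow> 'n fn \<Rightarrow> 'n fn) \<Rightarrow> 'n list \<Rightarrow> nat \<Rightarrow> 'n fn" where
  "star_list C [] = const_ser (\<lambda>x. 1)"
| "star_list C (i # is) = ser_star C (const_ser (coord i)) (star_list C is)"

text \<open>Sun-product cochain rho_r evaluated on the monomial x_{i_1}...x_{i_k}
  (the rho_r are linear on Pol, so they are determined by these values).\<close>
definition sun_cochain :: "(nat \<Rightarrow> 'n::finite fn \<Rightarrow> 'n fn \<Rightarrow> 'n fn) \<Rightarrow> nat \<Rightarrow> 'n list \<Rightarrow> 'n fn" where
  "sun_cochain C r is = (\<lambda>x. (1 / fact (length is)) *
      (\<Sum>\<sigma>\<in>{\<sigma>. \<sigma> permutes {0..<length is}}.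
          star_list C (map (\<lambda>j. is ! \<sigma> j) [0..<length is]) r x))"

end

(*
  The sun-product cochains are local. A star product of many functions that all vanish at x0
  vanishes at x0 to high order, because multiplying by a function vanishing at x0 gains one
  order of flatness while each bidifferential operator C_s loses only boundedly many. Expanding
  a monomial around x0 therefore shows that rho_r(p)(x0) only involves derivatives of p at x0 of
  bounded order, i.e. rho_r is the restriction to Pol of a differential operator R_r, with
  R_0 = id. The operator series T = R^-1 is an equivalence from the given star product to the
  transported one, f *' g = T (R f * R g), and since R fixes constants and coordinates the
  sun-product cochains of *' are T o rho = T o R = id on Pol.
*)

theory Submission
  imports Defs "HOL-Combinatorics.Multiset_Permutations"
begin

section \<open>Partial derivatives of smooth functions\<close>

lemma pderivs_append: "pderivs (is @ js) f = pderivs is (pderivs js f)"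
  by (induct "is") auto

lemma line_has_deriv:
  assumes "f differentiable (at x)"
  shows "((\<lambda>t. f (x + t *\<^sub>R axis i 1)) has_real_derivative partial i f x) (at 0)"
proof -
  have hl: "((\<lambda>t::real. x + t *\<^sub>R axis i (1::real)) has_derivative (\<lambda>t. t *\<^sub>R axis i 1)) (at 0)"
    by (auto intro!: derivative_eq_intros)
  have "(\<lambda>t::real. x + t *\<^sub>R axis i (1::real)) differentiable (at 0)"
    using hl by (auto simp: differentiable_def)
  moreover have "f differentiable (at ((\<lambda>t::real. x + t *\<^sub>R axis i (1::real)) 0))"
    using assms by simp
  ultimately have "(f \<circ> (\<lambda>t::real. x + t *\<^sub>R axis i (1::real))) differentiable (at 0)"
    by (rule differentiable_chain_at)
  then have "(\<lambda>t. f (x + t *\<^sub>R axis i 1)) differentiable (at 0)" by (simp add: o_def)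
  then show ?thesis
    unfolding partial_def by (simp add: DERIV_deriv_iff_real_differentiable)
qed

lemma partial_add:
  assumes "f differentiable (at x)" "g differentiable (at x)"
  shows "partial i (\<lambda>y. f y + g y) x = partial i f x + partial i g x"
proof -
  have "((\<lambda>t. f (x + t *\<^sub>R axis i 1) + g (x + t *\<^sub>R axis i 1)) has_real_derivative
     partial i f x + partial i g x) (at 0)"
    by (intro DERIV_add line_has_deriv assms)
  then show ?thesis unfolding partial_def[of i "\<lambda>y. f y + g y"] by (rule DERIV_imp_deriv)
qed

lemma partial_mult:
  assumes "f differentiable (at x)" "g differentiable (at x)"
  shows "partial i (\<lambda>y. f y * g y) x = partial i f x * g x + f x * partial i g x"
proof -
  have "((\<lambda>t. f (x + t *\<^sub>R axis i 1) * g (x + t *\<^sub>R axis i 1)) has_real_derivative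
     partial i f x * g (x + 0 *\<^sub>R axis i 1) + f (x + 0 *\<^sub>R axis i 1) * partial i g x) (at 0)"
    using DERIV_mult[OF line_has_deriv[OF assms(1)] line_has_deriv[OF assms(2)], of i i] by (simp add: mult.commute)
  then show ?thesis unfolding partial_def[of i "\<lambda>y. f y * g y"]
    by (simp add: DERIV_imp_deriv)
qed

lemma partial_cmult:
  assumes "f differentiable (at x)"
  shows "partial i (\<lambda>y. c * f y) x = c * partial i f x"
proof -
  have "((\<lambda>t. c * f (x + t *\<^sub>R axis i 1)) has_real_derivative c * partial i f x) (at 0)"
    by (intro DERIV_cmult line_has_deriv assms)
  then show ?thesis unfolding partial_def[of i "\<lambda>y. c * f y"] by (rule DERIV_imp_deriv)
qed

lemma partial_const [simp]: "partial i (\<lambda>y. c) = (\<lambda>x. 0)"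
  unfolding partial_def by (simp add: deriv_const)

lemma partial_coord: "partial i (coord j) = (\<lambda>x. if i = j then 1 else 0)"
proof
  fix x
  have "((\<lambda>t. x $ j + t * axis i 1 $ j) has_real_derivative axis i 1 $ j) (at 0)"
    by (auto intro!: derivative_eq_intros)
  then have "partial i (coord j) x = axis i 1 $ j"
    unfolding partial_def coord_def by (simp add: DERIV_imp_deriv)
  then show "partial i (coord j) x = (if i = j then 1 else 0)"
    by (simp add: axis_def)
qed

lemma partial_sum:
  assumes "finite A" "\<And>a. a \<in> A \<Longrightarrow> h a differentiable (at x)"
  shows "partial i (\<lambda>y. \<Sum>a\<in>A. h a y) x = (\<Sum>a\<in>A. partial i (h a) x)"
  using assms
proof (induct A rule: finite_induct)
  case empty
  then show ?case by simp
next
  case (insert a A)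
  have d: "(\<lambda>y. \<Sum>a\<in>A. h a y) differentiable (at x)"
    using insert by (intro differentiable_sum) auto
  have "partial i (\<lambda>y. \<Sum>a\<in>insert a A. h a y) x = partial i (\<lambda>y. h a y + (\<Sum>a\<in>A. h a y)) x"
    using insert by simp
  also have "\<dots> = partial i (h a) x + partial i (\<lambda>y. \<Sum>a\<in>A. h a y) x"
    using partial_add[OF _ d, of "h a"] insert by simp
  finally show ?case using insert by simp
qed

lemma differentiable_sum_list:
  "(\<And>a. a \<in> set xs \<Longrightarrow> h a differentiable (at x)) \<Longrightarrow> (\<lambda>y. \<Sum>a\<leftarrow>xs. h a y) differentiable (at x)"
  by (induct xs) (auto intro!: differentiable_add)

lemma partial_sum_list:
  assumes "\<And>a. a \<in> set xs \<Longrightarrow> h a differentiable (at x)"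
  shows "partial i (\<lambda>y. \<Sum>a\<leftarrow>xs. h a y) x = (\<Sum>a\<leftarrow>xs. partial i (h a) x)"
  using assms
proof (induct xs)
  case Nil
  then show ?case by simp
next
  case (Cons a xs)
  have "partial i (\<lambda>y. h a y + (\<Sum>a\<leftarrow>xs. h a y)) x = partial i (h a) x + partial i (\<lambda>y. \<Sum>a\<leftarrow>xs. h a y) x"
    using Cons.prems by (intro partial_add differentiable_sum_list) auto
  then show ?case using Cons by simp
qed

lemma smooth_pderivs_differentiable: "smooth f \<Longrightarrow> pderivs is f differentiable (at x)"
  unfolding smooth_def by blast

lemma smooth_pderivs: "smooth f \<Longrightarrow> smooth (pderivs is f)"
  unfolding smooth_def by (simp add: pderivs_append[symmetric])

lemma smooth_partial: "smooth f \<Longrightarrow> smooth (partial i f)"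
  using smooth_pderivs[of f "[i]"] by simp

lemma pderivs_add:
  assumes "smooth f" "smooth g"
  shows "pderivs is (\<lambda>x. f x + g x) = (\<lambda>x. pderivs is f x + pderivs is g x)"
proof (induct "is")
  case Nil
  then show ?case by simp
next
  case (Cons i "is")
  show ?case
    by (rule ext, simp add: Cons partial_add smooth_pderivs_differentiable assms)
qed

lemma smooth_add: "smooth f \<Longrightarrow> smooth g \<Longrightarrow> smooth (\<lambda>x. f x + g x)"
  unfolding smooth_def[of "\<lambda>x. f x + g x"]
  by (auto simp: pderivs_add intro!: differentiable_add smooth_pderivs_differentiable)

lemma pderivs_cmult:
  assumes "smooth f"
  shows "pderivs is (\<lambda>x. c * f x) = (\<lambda>x. c * pderivs is f x)"
proof (induct "is")
  case Nil
  then show ?case by simp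
next
  case (Cons i "is")
  show ?case
    by (rule ext, simp add: Cons partial_cmult smooth_pderivs_differentiable assms)
qed

lemma smooth_cmult: "smooth f \<Longrightarrow> smooth (\<lambda>x. c * f x)"
  unfolding smooth_def[of "\<lambda>x. c * f x"]
  by (auto simp: pderivs_cmult intro!: differentiable_mult smooth_pderivs_differentiable)

lemma pderivs_const: "pderivs is (\<lambda>x. c) = (\<lambda>x. if is = [] then c else 0)"
  by (induct "is") auto

lemma smooth_const: "smooth (\<lambda>x. c)"
  unfolding smooth_def by (simp add: pderivs_const)

lemma pderivs_coord: "pderivs is (coord j) = (\<lambda>x. case is of [] \<Rightarrow> x $ j | [i] \<Rightarrow> (if i = j then 1 else 0) | _ \<Rightarrow> 0)"
proof (induct "is")
  case Nil
  then show ?case by (simp add: coord_def)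
next
  case (Cons i "is")
  show ?case
  proof (cases "is")
    case Nil
    then show ?thesis by (simp add: partial_coord)
  next
    case (Cons k ks)
    then have "pderivs is (coord j) = (\<lambda>x. if ks = [] then (if k = j then 1 else 0) else 0)"
      using Cons.hyps by (auto split: list.splits)
    then show ?thesis using Cons by (auto split: list.splits if_splits)
  qed
qed

lemma smooth_coord: "smooth (coord j)"
  unfolding smooth_def pderivs_coord
proof (intro allI)
  fix "is" :: "'a list" and x :: "real^'a"
  show "(\<lambda>x. case is of [] \<Rightarrow> x $ j | [i] \<Rightarrow> (if i = j then 1 else 0) | _ \<Rightarrow> 0) differentiable (at x)"
  proof (cases "is")
    case Nil
    then show ?thesis by (simp add: bounded_linear_imp_differentiable bounded_linear_vec_nth)
  next
    case (Cons k ks)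
    then show ?thesis by (cases ks) simp_all
  qed
qed

lemma smooth_coord_shift: "smooth (\<lambda>y. y $ i - c)"
  using smooth_add[OF smooth_coord[of i] smooth_const[of "-c"]] by (simp add: coord_def)

lemma smooth_neg_coord: "smooth (\<lambda>x. - (x $ i))"
  using smooth_cmult[OF smooth_coord[of i], of "-1"] by (simp add: coord_def)

lemma pderivs_sum:
  assumes "finite A" "\<And>a. a \<in> A \<Longrightarrow> smooth (h a)"
  shows "pderivs is (\<lambda>x. \<Sum>a\<in>A. h a x) = (\<lambda>x. \<Sum>a\<in>A. pderivs is (h a) x)"
proof (induct "is")
  case Nil
  then show ?case by simp
next
  case (Cons i "is")
  show ?case
    by (rule ext, simp add: Cons, rule partial_sum, auto intro: assms smooth_pderivs_differentiable)
qed

lemma smooth_sum: "finite A \<Longrightarrow> (\<And>a. a \<in> A \<Longrightarrow> smooth (h a)) \<Longrightarrow> smooth (\<lambda>x. \<Sum>a\<in>A. h a x)"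
  unfolding smooth_def[of "\<lambda>x. \<Sum>a\<in>A. h a x"]
  by (auto simp: pderivs_sum intro!: differentiable_sum smooth_pderivs_differentiable)

fun leibniz_splits :: "'a list \<Rightarrow> ('a list \<times> 'a list) list" where
  "leibniz_splits [] = [([], [])]"
| "leibniz_splits (i # is) = concat (map (\<lambda>(a, b). [(i # a, b), (a, i # b)]) (leibniz_splits is))"

lemma leibniz_splits_length: "(a, b) \<in> set (leibniz_splits is) \<Longrightarrow> length a + length b = length is"
  by (induct "is" arbitrary: a b) auto

lemma sum_list_concat_pairs:
  "(\<Sum>p\<leftarrow>concat (map (\<lambda>p. [u p, v p]) xs). h p) = (\<Sum>p\<leftarrow>xs. h (u p) + h (v p))"
  by (induct xs) (auto simp: add.assoc)

lemma pderivs_mult: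
  assumes "smooth f" "smooth g"
  shows "pderivs is (\<lambda>x. f x * g x) = (\<lambda>x. \<Sum>(a,b)\<leftarrow>leibniz_splits is. pderivs a f x * pderivs b g x)"
proof (induct "is")
  case Nil
  then show ?case by simp
next
  case (Cons i "is")
  show ?case
  proof
    fix x
    have "pderivs (i # is) (\<lambda>x. f x * g x) x =
      partial i (\<lambda>x. \<Sum>p\<leftarrow>leibniz_splits is. (\<lambda>p x. pderivs (fst p) f x * pderivs (snd p) g x) p x) x"
      by (simp add: Cons case_prod_beta)
    also have "\<dots> = (\<Sum>p\<leftarrow>leibniz_splits is. partial i (\<lambda>x. pderivs (fst p) f x * pderivs (snd p) g x) x)"
      by (rule partial_sum_list) (auto intro!: differentiable_mult smooth_pderivs_differentiable assms)
    also have "\<dots> = (\<Sum>p\<leftarrow>leibniz_splits is. pderivs (i # fst p) f x * pderivs (snd p) g x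
                     + pderivs (fst p) f x * pderivs (i # snd p) g x)"
      by (intro arg_cong[where f=sum_list] map_cong refl)
         (simp add: partial_mult smooth_pderivs_differentiable assms)
    also have "\<dots> = (\<Sum>(a,b)\<leftarrow>leibniz_splits (i # is). pderivs a f x * pderivs b g x)"
      by (simp add: sum_list_concat_pairs split_def)
    finally show "pderivs (i # is) (\<lambda>x. f x * g x) x = (\<Sum>(a,b)\<leftarrow>leibniz_splits (i # is). pderivs a f x * pderivs b g x)" .
  qed
qed

lemma smooth_mult: "smooth f \<Longrightarrow> smooth g \<Longrightarrow> smooth (\<lambda>x. f x * g x)"
  unfolding smooth_def[of "\<lambda>x. f x * g x"]
  by (auto simp: pderivs_mult case_prod_beta intro!: differentiable_sum_list differentiable_mult smooth_pderivs_differentiable)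

lemma smooth_prod: "finite A \<Longrightarrow> (\<And>a. a \<in> A \<Longrightarrow> smooth (h a)) \<Longrightarrow> smooth (\<lambda>x. \<Prod>a\<in>A. h a x)"
  by (induct A rule: finite_induct) (auto intro!: smooth_mult simp: smooth_const)

lemma smooth_differentiable: "smooth f \<Longrightarrow> f differentiable (at x)"
  using smooth_pderivs_differentiable[of f "[]"] by simp

section \<open>Differential and bidifferential operators\<close>

lemma finite_idx_lists [simp]: "finite (idx_lists k :: 'n::finite list set)"
  unfolding idx_lists_def using finite_lists_length_le[of "UNIV::'n set" k] by simp

lemma diff_opI:
  fixes c :: "'b \<Rightarrow> 'n::finite fn" and \<gamma> :: "'b \<Rightarrow> 'n list"
  assumes B: "finite B" and cs: "\<And>b. b \<in> B \<Longrightarrow> smooth (c b)"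
    and D: "\<And>f. smooth f \<Longrightarrow> D f = (\<lambda>x. \<Sum>b\<in>B. c b x * pderivs (\<gamma> b) f x)"
  shows "diff_op D"
proof -
  define k where "k = Max (insert 0 (length ` \<gamma> ` B))"
  have sub: "\<gamma> ` B \<subseteq> idx_lists k"
    using B by (auto simp: idx_lists_def k_def)
  define a where "a \<alpha> = (\<lambda>x. \<Sum>b\<in>{b\<in>B. \<gamma> b = \<alpha>}. c b x)" for \<alpha>
  have "smooth (a \<alpha>)" for \<alpha>
    unfolding a_def using B by (intro smooth_sum) (auto intro: cs)
  moreover have "D f = (\<lambda>x. \<Sum>\<alpha>\<in>idx_lists k. a \<alpha> x * pderivs \<alpha> f x)" if "smooth f" for f
  proof
    fix x
    have "(\<Sum>\<alpha>\<in>idx_lists k. a \<alpha> x * pderivs \<alpha> f x) =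
        (\<Sum>\<alpha>\<in>idx_lists k. \<Sum>b\<in>{b\<in>B. \<gamma> b = \<alpha>}. c b x * pderivs (\<gamma> b) f x)"
      unfolding a_def by (auto simp: sum_distrib_right intro!: sum.cong)
    also have "\<dots> = (\<Sum>b\<in>B. c b x * pderivs (\<gamma> b) f x)"
      by (rule sum.group[OF B finite_idx_lists sub])
    finally show "D f x = (\<Sum>\<alpha>\<in>idx_lists k. a \<alpha> x * pderivs \<alpha> f x)"
      using D[OF that] by simp
  qed
  ultimately show ?thesis unfolding diff_op_def by blast
qed

lemma bidiff_opI:
  fixes c :: "'b \<Rightarrow> 'n::finite fn" and \<gamma>1 \<gamma>2 :: "'b \<Rightarrow> 'n list"
  assumes B: "finite B" and cs: "\<And>b. b \<in> B \<Longrightarrow> smooth (c b)"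
    and D: "\<And>f g. smooth f \<Longrightarrow> smooth g \<Longrightarrow>
       D f g = (\<lambda>x. \<Sum>b\<in>B. c b x * pderivs (\<gamma>1 b) f x * pderivs (\<gamma>2 b) g x)"
  shows "bidiff_op D"
proof -
  define k where "k = Max (insert 0 (length ` \<gamma>1 ` B \<union> length ` \<gamma>2 ` B))"
  have sub: "(\<lambda>b. (\<gamma>1 b, \<gamma>2 b)) ` B \<subseteq> idx_lists k \<times> idx_lists k"
    using B by (auto simp: idx_lists_def k_def)
  define a where "a \<alpha> \<beta> = (\<lambda>x. \<Sum>b\<in>{b\<in>B. (\<gamma>1 b, \<gamma>2 b) = (\<alpha>, \<beta>)}. c b x)" for \<alpha> \<beta>
  have "smooth (a \<alpha> \<beta>)" for \<alpha> \<beta>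
    unfolding a_def using B by (intro smooth_sum) (auto intro: cs)
  moreover have "D f g = (\<lambda>x. \<Sum>\<alpha>\<in>idx_lists k. \<Sum>\<beta>\<in>idx_lists k. a \<alpha> \<beta> x * pderivs \<alpha> f x * pderivs \<beta> g x)"
    if "smooth f" "smooth g" for f g
  proof
    fix x
    have "(\<Sum>\<alpha>\<in>idx_lists k. \<Sum>\<beta>\<in>idx_lists k. a \<alpha> \<beta> x * pderivs \<alpha> f x * pderivs \<beta> g x) =
        (\<Sum>p\<in>idx_lists k \<times> idx_lists k. a (fst p) (snd p) x * pderivs (fst p) f x * pderivs (snd p) g x)"
      by (simp add: sum.cartesian_product case_prod_beta)
    also have "\<dots> = (\<Sum>p\<in>idx_lists k \<times> idx_lists k. \<Sum>b\<in>{b\<in>B. (\<gamma>1 b, \<gamma>2 b) = p}.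
           c b x * pderivs (\<gamma>1 b) f x * pderivs (\<gamma>2 b) g x)"
      unfolding a_def by (auto simp: sum_distrib_right intro!: sum.cong)
    also have "\<dots> = (\<Sum>b\<in>B. c b x * pderivs (\<gamma>1 b) f x * pderivs (\<gamma>2 b) g x)"
      by (rule sum.group[OF B _ sub]) simp
    finally show "D f g x = (\<Sum>\<alpha>\<in>idx_lists k. \<Sum>\<beta>\<in>idx_lists k. a \<alpha> \<beta> x * pderivs \<alpha> f x * pderivs \<beta> g x)"
      using D[OF that] by simp
  qed
  ultimately show ?thesis unfolding bidiff_op_def by blast
qed

lemma diff_opE:
  assumes "diff_op D"
  obtains k a where "\<And>\<alpha>. smooth (a \<alpha>)"
    "\<And>f. smooth f \<Longrightarrow> D f = (\<lambda>x. \<Sum>\<alpha>\<in>idx_lists k. a \<alpha> x * pderivs \<alpha> f x)"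
  using assms unfolding diff_op_def by blast

lemma bidiff_opE:
  assumes "bidiff_op D"
  obtains k a where "\<And>\<alpha> \<beta>. smooth (a \<alpha> \<beta>)"
    "\<And>f g. smooth f \<Longrightarrow> smooth g \<Longrightarrow>
       D f g = (\<lambda>x. \<Sum>\<alpha>\<in>idx_lists k. \<Sum>\<beta>\<in>idx_lists k. a \<alpha> \<beta> x * pderivs \<alpha> f x * pderivs \<beta> g x)"
  using assms unfolding bidiff_op_def by blast

lemma smooth_diff_op:
  assumes "diff_op D" "smooth f" shows "smooth (D f)"
proof -
  obtain k a where a: "\<And>\<alpha>. smooth (a \<alpha>)"
    "\<And>f. smooth f \<Longrightarrow> D f = (\<lambda>x. \<Sum>\<alpha>\<in>idx_lists k. a \<alpha> x * pderivs \<alpha> f x)"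
    using assms(1) by (rule diff_opE) blast
  show ?thesis unfolding a(2)[OF assms(2)]
    by (intro smooth_sum finite_idx_lists smooth_mult smooth_pderivs a assms(2))
qed

lemma smooth_bidiff_op:
  assumes "bidiff_op D" "smooth f" "smooth g" shows "smooth (D f g)"
proof -
  obtain k a where a: "\<And>\<alpha> \<beta>. smooth (a \<alpha> \<beta>)"
    "\<And>f g. smooth f \<Longrightarrow> smooth g \<Longrightarrow>
       D f g = (\<lambda>x. \<Sum>\<alpha>\<in>idx_lists k. \<Sum>\<beta>\<in>idx_lists k. a \<alpha> \<beta> x * pderivs \<alpha> f x * pderivs \<beta> g x)"
    using assms(1) by (rule bidiff_opE) blast
  show ?thesis unfolding a(2)[OF assms(2,3)]
    by (intro smooth_sum finite_idx_lists smooth_mult smooth_pderivs a assms(2,3))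
qed

lemma diff_op_cong:
  assumes "diff_op D" "\<And>f. smooth f \<Longrightarrow> D' f = D f"
  shows "diff_op D'"
  using assms unfolding diff_op_def by simp

lemma bidiff_op_cong:
  assumes "bidiff_op D" "\<And>f g. smooth f \<Longrightarrow> smooth g \<Longrightarrow> D' f g = D f g"
  shows "bidiff_op D'"
  using assms unfolding bidiff_op_def by simp

lemma diff_op_id: "diff_op (\<lambda>f. f)"
  by (rule diff_opI[of "{()}" "\<lambda>_ x. 1" _ "\<lambda>_. []"]) (auto simp: smooth_const)

lemma diff_op_zero: "diff_op (\<lambda>f x. 0)"
  by (rule diff_opI[of "{}"]) auto

lemma diff_op_mult:
  assumes "diff_op D" "smooth h"
  shows "diff_op (\<lambda>f x. h x * D f x)"
proof -
  obtain k a where a: "\<And>\<alpha>. smooth (a \<alpha>)"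
    "\<And>f. smooth f \<Longrightarrow> D f = (\<lambda>x. \<Sum>\<alpha>\<in>idx_lists k. a \<alpha> x * pderivs \<alpha> f x)"
    using assms(1) by (rule diff_opE) blast
  show ?thesis
    by (rule diff_opI[of "idx_lists k" "\<lambda>\<alpha> x. h x * a \<alpha> x" _ "\<lambda>\<alpha>. \<alpha>"])
       (auto simp: a sum_distrib_left mult.assoc intro!: smooth_mult assms)
qed

lemma diff_op_add:
  assumes "diff_op D1" "diff_op D2"
  shows "diff_op (\<lambda>f x. D1 f x + D2 f x)"
proof -
  obtain k1 a1 where a1: "\<And>\<alpha>. smooth (a1 \<alpha>)"
    "\<And>f. smooth f \<Longrightarrow> D1 f = (\<lambda>x. \<Sum>\<alpha>\<in>idx_lists k1. a1 \<alpha> x * pderivs \<alpha> f x)"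
    using assms(1) by (rule diff_opE) blast
  obtain k2 a2 where a2: "\<And>\<alpha>. smooth (a2 \<alpha>)"
    "\<And>f. smooth f \<Longrightarrow> D2 f = (\<lambda>x. \<Sum>\<alpha>\<in>idx_lists k2. a2 \<alpha> x * pderivs \<alpha> f x)"
    using assms(2) by (rule diff_opE) blast
  have e: "(\<Sum>b\<in>Inl ` idx_lists k1 \<union> Inr ` idx_lists k2. F b) =
     (\<Sum>\<alpha>\<in>idx_lists k1. F (Inl \<alpha>)) + (\<Sum>\<alpha>\<in>idx_lists k2. F (Inr \<alpha>))" for F :: "_ \<Rightarrow> real"
    by (subst sum.union_disjoint) (auto simp: sum.reindex)
  show ?thesis
    by (rule diff_opI[of "Inl ` idx_lists k1 \<union> Inr ` idx_lists k2"
          "case_sum a1 a2" _ "case_sum (\<lambda>\<alpha>. \<alpha>) (\<lambda>\<alpha>. \<alpha>)"])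
       (auto simp: a1 a2 e)
qed

lemma diff_op_sum:
  "finite A \<Longrightarrow> (\<And>a. a \<in> A \<Longrightarrow> diff_op (D a)) \<Longrightarrow> diff_op (\<lambda>f x. \<Sum>a\<in>A. D a f x)"
proof (induct A rule: finite_induct)
  case empty
  then show ?case using diff_op_zero by simp
next
  case (insert a A)
  then show ?case using diff_op_add[of "D a" "\<lambda>f x. \<Sum>a\<in>A. D a f x"] by simp
qed

lemma diff_op_partial:
  assumes "diff_op D"
  shows "diff_op (\<lambda>f. partial i (D f))"
proof -
  obtain k a where a: "\<And>\<alpha>. smooth (a \<alpha>)"
    "\<And>f. smooth f \<Longrightarrow> D f = (\<lambda>x. \<Sum>\<alpha>\<in>idx_lists k. a \<alpha> x * pderivs \<alpha> f x)"
    using assms(1) by (rule diff_opE) blast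
  have "diff_op (\<lambda>f x. (\<Sum>\<alpha>\<in>idx_lists k. partial i (a \<alpha>) x * pderivs \<alpha> f x) +
                         (\<Sum>\<alpha>\<in>idx_lists k. a \<alpha> x * pderivs (i # \<alpha>) f x))"
    by (intro diff_op_add diff_opI[OF finite_idx_lists, where \<gamma>="\<lambda>\<alpha>. \<alpha>"]
          diff_opI[OF finite_idx_lists, where \<gamma>="\<lambda>\<alpha>. i # \<alpha>"])
       (auto intro: smooth_partial a)
  then show ?thesis
  proof (rule diff_op_cong)
    fix f :: "'a fn" assume f: "smooth f"
    show "partial i (D f) = (\<lambda>x. (\<Sum>\<alpha>\<in>idx_lists k. partial i (a \<alpha>) x * pderivs \<alpha> f x) +
                         (\<Sum>\<alpha>\<in>idx_lists k. a \<alpha> x * pderivs (i # \<alpha>) f x))"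
    proof
      fix x
      have "partial i (D f) x = (\<Sum>\<alpha>\<in>idx_lists k. partial i (\<lambda>x. a \<alpha> x * pderivs \<alpha> f x) x)"
        unfolding a(2)[OF f]
        by (rule partial_sum) (auto intro!: smooth_differentiable smooth_mult smooth_pderivs a f)
      also have "\<dots> = (\<Sum>\<alpha>\<in>idx_lists k. partial i (a \<alpha>) x * pderivs \<alpha> f x + a \<alpha> x * pderivs (i # \<alpha>) f x)"
        by (intro sum.cong refl) (simp add: partial_mult smooth_pderivs_differentiable smooth_differentiable a f)
      finally show "partial i (D f) x = (\<Sum>\<alpha>\<in>idx_lists k. partial i (a \<alpha>) x * pderivs \<alpha> f x) +
                         (\<Sum>\<alpha>\<in>idx_lists k. a \<alpha> x * pderivs (i # \<alpha>) f x)"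
        by (simp add: sum.distrib)
    qed
  qed
qed

lemma diff_op_pderivs_comp: "diff_op D \<Longrightarrow> diff_op (\<lambda>f. pderivs \<alpha> (D f))"
  by (induct \<alpha>) (auto intro: diff_op_partial)

lemma diff_op_comp:
  assumes "diff_op D1" "diff_op D2"
  shows "diff_op (\<lambda>f. D1 (D2 f))"
proof -
  obtain k a where a: "\<And>\<alpha>. smooth (a \<alpha>)"
    "\<And>f. smooth f \<Longrightarrow> D1 f = (\<lambda>x. \<Sum>\<alpha>\<in>idx_lists k. a \<alpha> x * pderivs \<alpha> f x)"
    using assms(1) by (rule diff_opE) blast
  have "diff_op (\<lambda>f x. \<Sum>\<alpha>\<in>idx_lists k. a \<alpha> x * pderivs \<alpha> (D2 f) x)"
    by (intro diff_op_sum diff_op_mult diff_op_pderivs_comp assms a) simp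
  then show ?thesis
    by (rule diff_op_cong) (simp add: a smooth_diff_op assms)
qed

lemma pderivs_linear:
  assumes "smooth f" "smooth g"
  shows "pderivs \<alpha> (\<lambda>x. a * f x + b * g x) = (\<lambda>x. a * pderivs \<alpha> f x + b * pderivs \<alpha> g x)"
  using assms by (simp add: pderivs_add pderivs_cmult smooth_cmult)

lemma diff_op_linear:
  assumes "diff_op D" "smooth f" "smooth g"
  shows "D (\<lambda>x. a * f x + b * g x) = (\<lambda>x. a * D f x + b * D g x)"
proof -
  obtain k c where c: "\<And>\<alpha>. smooth (c \<alpha>)"
    "\<And>f. smooth f \<Longrightarrow> D f = (\<lambda>x. \<Sum>\<alpha>\<in>idx_lists k. c \<alpha> x * pderivs \<alpha> f x)"
    using assms(1) by (rule diff_opE) blast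
  have s: "smooth (\<lambda>x. a * f x + b * g x)" using assms by (intro smooth_add smooth_cmult)
  show ?thesis
    by (simp add: c(2)[OF s] c(2)[OF assms(2)] c(2)[OF assms(3)] pderivs_linear assms
        sum_distrib_left sum.distrib algebra_simps)
qed

lemma diff_op_zero_arg:
  assumes "diff_op D" shows "D (\<lambda>x. 0) = (\<lambda>x. 0)"
proof -
  obtain k c where c: "\<And>\<alpha>. smooth (c \<alpha>)"
    "\<And>f. smooth f \<Longrightarrow> D f = (\<lambda>x. \<Sum>\<alpha>\<in>idx_lists k. c \<alpha> x * pderivs \<alpha> f x)"
    using assms(1) by (rule diff_opE) blast
  show ?thesis by (simp add: c(2)[OF smooth_const] pderivs_const)
qed

lemma diff_op_add_arg:
  assumes "diff_op D" "smooth f" "smooth g"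
  shows "D (\<lambda>x. f x + g x) = (\<lambda>x. D f x + D g x)"
  using diff_op_linear[OF assms, of 1 1] by simp

lemma diff_op_cmult_arg:
  assumes "diff_op D" "smooth f"
  shows "D (\<lambda>x. a * f x) = (\<lambda>x. a * D f x)"
  using diff_op_linear[OF assms assms(2), of a 0] by simp

lemma diff_op_sum_arg:
  assumes "diff_op D" "finite A" "\<And>a. a \<in> A \<Longrightarrow> smooth (h a)"
  shows "D (\<lambda>x. \<Sum>a\<in>A. h a x) = (\<lambda>x. \<Sum>a\<in>A. D (h a) x)"
  using assms(2,3)
proof (induct A rule: finite_induct)
  case empty
  then show ?case using diff_op_zero_arg[OF assms(1)] by simp
next
  case (insert a A)
  have "D (\<lambda>x. \<Sum>a\<in>insert a A. h a x) = D (\<lambda>x. h a x + (\<Sum>a\<in>A. h a x))"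
    using insert by simp
  also have "\<dots> = (\<lambda>x. D (h a) x + D (\<lambda>x. \<Sum>a\<in>A. h a x) x)"
    using insert by (intro diff_op_add_arg assms(1) smooth_sum) auto
  finally show ?case using insert by simp
qed

lemma bidiff_op_linear_left:
  assumes "bidiff_op B" "smooth f" "smooth f'" "smooth g"
  shows "B (\<lambda>x. a * f x + b * f' x) g = (\<lambda>x. a * B f g x + b * B f' g x)"
proof -
  obtain k c where c: "\<And>\<alpha> \<beta>. smooth (c \<alpha> \<beta>)"
    "\<And>f g. smooth f \<Longrightarrow> smooth g \<Longrightarrow>
       B f g = (\<lambda>x. \<Sum>\<alpha>\<in>idx_lists k. \<Sum>\<beta>\<in>idx_lists k. c \<alpha> \<beta> x * pderivs \<alpha> f x * pderivs \<beta> g x)"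
    using assms(1) by (rule bidiff_opE) blast
  have s: "smooth (\<lambda>x. a * f x + b * f' x)" using assms by (intro smooth_add smooth_cmult)
  show ?thesis
    by (simp add: c(2)[OF s assms(4)] c(2)[OF assms(2,4)] c(2)[OF assms(3,4)] pderivs_linear assms
        sum_distrib_left sum.distrib algebra_simps)
qed

lemma bidiff_op_linear_right:
  assumes "bidiff_op B" "smooth f" "smooth g" "smooth g'"
  shows "B f (\<lambda>x. a * g x + b * g' x) = (\<lambda>x. a * B f g x + b * B f g' x)"
proof -
  obtain k c where c: "\<And>\<alpha> \<beta>. smooth (c \<alpha> \<beta>)"
    "\<And>f g. smooth f \<Longrightarrow> smooth g \<Longrightarrow>
       B f g = (\<lambda>x. \<Sum>\<alpha>\<in>idx_lists k. \<Sum>\<beta>\<in>idx_lists k. c \<alpha> \<beta> x * pderivs \<alpha> f x * pderivs \<beta> g x)"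
    using assms(1) by (rule bidiff_opE) blast
  have s: "smooth (\<lambda>x. a * g x + b * g' x)" using assms by (intro smooth_add smooth_cmult)
  show ?thesis
    by (simp add: c(2)[OF assms(2) s] c(2)[OF assms(2,3)] c(2)[OF assms(2,4)] pderivs_linear assms
        sum_distrib_left sum.distrib algebra_simps)
qed

lemma bidiff_op_zero_left:
  assumes "bidiff_op B" "smooth g" shows "B (\<lambda>x. 0) g = (\<lambda>x. 0)"
proof -
  obtain k c where c: "\<And>\<alpha> \<beta>. smooth (c \<alpha> \<beta>)"
    "\<And>f g. smooth f \<Longrightarrow> smooth g \<Longrightarrow>
       B f g = (\<lambda>x. \<Sum>\<alpha>\<in>idx_lists k. \<Sum>\<beta>\<in>idx_lists k. c \<alpha> \<beta> x * pderivs \<alpha> f x * pderivs \<beta> g x)"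
    using assms(1) by (rule bidiff_opE) blast
  show ?thesis by (simp add: c(2)[OF smooth_const assms(2)] pderivs_const)
qed

lemma bidiff_op_zero_right:
  assumes "bidiff_op B" "smooth f" shows "B f (\<lambda>x. 0) = (\<lambda>x. 0)"
proof -
  obtain k c where c: "\<And>\<alpha> \<beta>. smooth (c \<alpha> \<beta>)"
    "\<And>f g. smooth f \<Longrightarrow> smooth g \<Longrightarrow>
       B f g = (\<lambda>x. \<Sum>\<alpha>\<in>idx_lists k. \<Sum>\<beta>\<in>idx_lists k. c \<alpha> \<beta> x * pderivs \<alpha> f x * pderivs \<beta> g x)"
    using assms(1) by (rule bidiff_opE) blast
  show ?thesis by (simp add: c(2)[OF assms(2) smooth_const] pderivs_const)
qed

lemma bidiff_op_sum_right:
  assumes "bidiff_op B" "finite A" "\<And>a. a \<in> A \<Longrightarrow> smooth (h a)" "smooth f"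
  shows "B f (\<lambda>x. \<Sum>a\<in>A. h a x) = (\<lambda>x. \<Sum>a\<in>A. B f (h a) x)"
  using assms(2,3)
proof (induct A rule: finite_induct)
  case empty
  then show ?case using bidiff_op_zero_right[OF assms(1,4)] by simp
next
  case (insert a A)
  have "B f (\<lambda>x. \<Sum>a\<in>insert a A. h a x) = B f (\<lambda>x. 1 * h a x + 1 * (\<Sum>a\<in>A. h a x))"
    using insert by simp
  also have "\<dots> = (\<lambda>x. 1 * B f (h a) x + 1 * B f (\<lambda>x. \<Sum>a\<in>A. h a x) x)"
    using insert by (intro bidiff_op_linear_right assms(1,4) smooth_sum) auto
  finally show ?case using insert by simp
qed

lemma bidiff_op_prod:
  assumes "diff_op D1" "diff_op D2" "smooth h"
  shows "bidiff_op (\<lambda>f g x. h x * D1 f x * D2 g x)"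
proof -
  obtain k1 a1 where a1: "\<And>\<alpha>. smooth (a1 \<alpha>)"
    "\<And>f. smooth f \<Longrightarrow> D1 f = (\<lambda>x. \<Sum>\<alpha>\<in>idx_lists k1. a1 \<alpha> x * pderivs \<alpha> f x)"
    using assms(1) by (rule diff_opE) blast
  obtain k2 a2 where a2: "\<And>\<alpha>. smooth (a2 \<alpha>)"
    "\<And>f. smooth f \<Longrightarrow> D2 f = (\<lambda>x. \<Sum>\<alpha>\<in>idx_lists k2. a2 \<alpha> x * pderivs \<alpha> f x)"
    using assms(2) by (rule diff_opE) blast
  show ?thesis
  proof (rule bidiff_opI[of "idx_lists k1 \<times> idx_lists k2" "\<lambda>p x. h x * a1 (fst p) x * a2 (snd p) x"
        _ fst snd])
    fix f g :: "'a fn" assume "smooth f" "smooth g"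
    then show "(\<lambda>x. h x * D1 f x * D2 g x) = (\<lambda>x. \<Sum>b\<in>idx_lists k1 \<times> idx_lists k2.
         h x * a1 (fst b) x * a2 (snd b) x * pderivs (fst b) f x * pderivs (snd b) g x)"
      by (simp add: a1 a2 sum_distrib_left sum_distrib_right sum.cartesian_product case_prod_beta algebra_simps)
  qed (auto intro!: smooth_mult assms a1 a2)
qed

lemma bidiff_op_zero: "bidiff_op (\<lambda>f g x. 0)"
  by (rule bidiff_opI[of "{}"]) auto

lemma bidiff_op_add:
  assumes "bidiff_op D1" "bidiff_op D2"
  shows "bidiff_op (\<lambda>f g x. D1 f g x + D2 f g x)"
proof -
  obtain k1 a1 where a1: "\<And>\<alpha> \<beta>. smooth (a1 \<alpha> \<beta>)"
    "\<And>f g. smooth f \<Longrightarrow> smooth g \<Longrightarrow>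
       D1 f g = (\<lambda>x. \<Sum>\<alpha>\<in>idx_lists k1. \<Sum>\<beta>\<in>idx_lists k1. a1 \<alpha> \<beta> x * pderivs \<alpha> f x * pderivs \<beta> g x)"
    using assms(1) by (rule bidiff_opE) blast
  obtain k2 a2 where a2: "\<And>\<alpha> \<beta>. smooth (a2 \<alpha> \<beta>)"
    "\<And>f g. smooth f \<Longrightarrow> smooth g \<Longrightarrow>
       D2 f g = (\<lambda>x. \<Sum>\<alpha>\<in>idx_lists k2. \<Sum>\<beta>\<in>idx_lists k2. a2 \<alpha> \<beta> x * pderivs \<alpha> f x * pderivs \<beta> g x)"
    using assms(2) by (rule bidiff_opE) blast
  let ?I1 = "idx_lists k1 \<times> idx_lists k1" and ?I2 = "idx_lists k2 \<times> idx_lists k2"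
  have e: "(\<Sum>b\<in>Inl ` ?I1 \<union> Inr ` ?I2. F b) =
     (\<Sum>p\<in>?I1. F (Inl p)) + (\<Sum>p\<in>?I2. F (Inr p))" for F :: "_ \<Rightarrow> real"
    by (subst sum.union_disjoint) (auto simp: sum.reindex)
  show ?thesis
  proof (rule bidiff_opI[of "Inl ` ?I1 \<union> Inr ` ?I2"
          "case_sum (\<lambda>p. a1 (fst p) (snd p)) (\<lambda>p. a2 (fst p) (snd p))" _
          "case_sum fst fst" "case_sum snd snd"])
    fix f g :: "'a fn" assume "smooth f" "smooth g"
    then show "(\<lambda>x. D1 f g x + D2 f g x) = (\<lambda>x. \<Sum>b\<in>Inl ` ?I1 \<union> Inr ` ?I2.
       case_sum (\<lambda>p. a1 (fst p) (snd p)) (\<lambda>p. a2 (fst p) (snd p)) b x *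
       pderivs (case_sum fst fst b) f x * pderivs (case_sum snd snd b) g x)"
      by (simp only: e) (simp add: a1 a2 sum.cartesian_product case_prod_beta)
  qed (auto intro: a1 a2)
qed

lemma bidiff_op_sum:
  "finite A \<Longrightarrow> (\<And>a. a \<in> A \<Longrightarrow> bidiff_op (D a)) \<Longrightarrow> bidiff_op (\<lambda>f g x. \<Sum>a\<in>A. D a f g x)"
proof (induct A rule: finite_induct)
  case empty
  then show ?case using bidiff_op_zero by simp
next
  case (insert a A)
  then show ?case using bidiff_op_add[of "D a" "\<lambda>f g x. \<Sum>a\<in>A. D a f g x"] by simp
qed

lemma bidiff_op_mult:
  assumes "bidiff_op D" "smooth h"
  shows "bidiff_op (\<lambda>f g x. h x * D f g x)"
proof -
  obtain k a where a: "\<And>\<alpha> \<beta>. smooth (a \<alpha> \<beta>)"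
    "\<And>f g. smooth f \<Longrightarrow> smooth g \<Longrightarrow>
       D f g = (\<lambda>x. \<Sum>\<alpha>\<in>idx_lists k. \<Sum>\<beta>\<in>idx_lists k. a \<alpha> \<beta> x * pderivs \<alpha> f x * pderivs \<beta> g x)"
    using assms(1) by (rule bidiff_opE) blast
  show ?thesis
  proof (rule bidiff_opI[of "idx_lists k \<times> idx_lists k" "\<lambda>p x. h x * a (fst p) (snd p) x" _ fst snd])
    fix f g :: "'a fn" assume "smooth f" "smooth g"
    then show "(\<lambda>x. h x * D f g x) = (\<lambda>x. \<Sum>b\<in>idx_lists k \<times> idx_lists k.
         h x * a (fst b) (snd b) x * pderivs (fst b) f x * pderivs (snd b) g x)"
      by (simp add: a sum_distrib_left sum.cartesian_product case_prod_beta algebra_simps)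
  qed (auto intro!: smooth_mult assms a)
qed

lemma bidiff_op_partial:
  assumes "bidiff_op D"
  shows "bidiff_op (\<lambda>f g. partial i (D f g))"
proof -
  obtain k a where a: "\<And>\<alpha> \<beta>. smooth (a \<alpha> \<beta>)"
    "\<And>f g. smooth f \<Longrightarrow> smooth g \<Longrightarrow>
       D f g = (\<lambda>x. \<Sum>\<alpha>\<in>idx_lists k. \<Sum>\<beta>\<in>idx_lists k. a \<alpha> \<beta> x * pderivs \<alpha> f x * pderivs \<beta> g x)"
    using assms(1) by (rule bidiff_opE) blast
  let ?I = "idx_lists k \<times> idx_lists k"
  have "bidiff_op (\<lambda>f g x. (\<Sum>p\<in>?I. partial i (a (fst p) (snd p)) x * pderivs (fst p) f x * pderivs (snd p) g x)
       + (\<Sum>p\<in>?I. a (fst p) (snd p) x * pderivs (i # fst p) f x * pderivs (snd p) g x)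
       + (\<Sum>p\<in>?I. a (fst p) (snd p) x * pderivs (fst p) f x * pderivs (i # snd p) g x))"
    by (intro bidiff_op_add bidiff_opI[where B="?I", OF _ _ refl]) (auto intro: a smooth_partial)
  then show ?thesis
  proof (rule bidiff_op_cong)
    fix f g :: "'a fn" assume f: "smooth f" and g: "smooth g"
    show "partial i (D f g) = (\<lambda>x. (\<Sum>p\<in>?I. partial i (a (fst p) (snd p)) x * pderivs (fst p) f x * pderivs (snd p) g x)
       + (\<Sum>p\<in>?I. a (fst p) (snd p) x * pderivs (i # fst p) f x * pderivs (snd p) g x)
       + (\<Sum>p\<in>?I. a (fst p) (snd p) x * pderivs (fst p) f x * pderivs (i # snd p) g x))"
    proof
      fix x
      have "D f g = (\<lambda>x. \<Sum>p\<in>?I. a (fst p) (snd p) x * pderivs (fst p) f x * pderivs (snd p) g x)"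
        by (simp add: a f g sum.cartesian_product case_prod_beta)
      then have "partial i (D f g) x = (\<Sum>p\<in>?I. partial i (\<lambda>x. a (fst p) (snd p) x * pderivs (fst p) f x * pderivs (snd p) g x) x)"
        by (simp, intro partial_sum) (auto intro!: smooth_differentiable smooth_mult smooth_pderivs a f g)
      also have "\<dots> = (\<Sum>p\<in>?I. partial i (a (fst p) (snd p)) x * pderivs (fst p) f x * pderivs (snd p) g x
         + a (fst p) (snd p) x * pderivs (i # fst p) f x * pderivs (snd p) g x
         + a (fst p) (snd p) x * pderivs (fst p) f x * pderivs (i # snd p) g x)"
        by (intro sum.cong refl)
           (simp add: partial_mult smooth_differentiable smooth_mult smooth_pderivs a f g algebra_simps)
      finally show "partial i (D f g) x = (\<Sum>p\<in>?I. partial i (a (fst p) (snd p)) x * pderivs (fst p) f x * pderivs (snd p) g x)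
       + (\<Sum>p\<in>?I. a (fst p) (snd p) x * pderivs (i # fst p) f x * pderivs (snd p) g x)
       + (\<Sum>p\<in>?I. a (fst p) (snd p) x * pderivs (fst p) f x * pderivs (i # snd p) g x)"
        by (simp add: sum.distrib)
    qed
  qed
qed

lemma bidiff_op_pderivs_comp: "bidiff_op D \<Longrightarrow> bidiff_op (\<lambda>f g. pderivs \<alpha> (D f g))"
  by (induct \<alpha>) (auto intro: bidiff_op_partial)

lemma diff_bidiff_comp:
  assumes "diff_op D" "bidiff_op B"
  shows "bidiff_op (\<lambda>f g. D (B f g))"
proof -
  obtain k a where a: "\<And>\<alpha>. smooth (a \<alpha>)"
    "\<And>f. smooth f \<Longrightarrow> D f = (\<lambda>x. \<Sum>\<alpha>\<in>idx_lists k. a \<alpha> x * pderivs \<alpha> f x)"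
    using assms(1) by (rule diff_opE) blast
  have "bidiff_op (\<lambda>f g x. \<Sum>\<alpha>\<in>idx_lists k. a \<alpha> x * pderivs \<alpha> (B f g) x)"
    by (intro bidiff_op_sum bidiff_op_mult bidiff_op_pderivs_comp assms a) simp
  then show ?thesis
    by (rule bidiff_op_cong) (simp add: a smooth_bidiff_op assms)
qed

lemma bidiff_diff_comp:
  assumes "bidiff_op B" "diff_op D1" "diff_op D2"
  shows "bidiff_op (\<lambda>f g. B (D1 f) (D2 g))"
proof -
  obtain k a where a: "\<And>\<alpha> \<beta>. smooth (a \<alpha> \<beta>)"
    "\<And>f g. smooth f \<Longrightarrow> smooth g \<Longrightarrow>
       B f g = (\<lambda>x. \<Sum>\<alpha>\<in>idx_lists k. \<Sum>\<beta>\<in>idx_lists k. a \<alpha> \<beta> x * pderivs \<alpha> f x * pderivs \<beta> g x)"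
    using assms(1) by (rule bidiff_opE) blast
  have "bidiff_op (\<lambda>f g x. \<Sum>\<alpha>\<in>idx_lists k. \<Sum>\<beta>\<in>idx_lists k. a \<alpha> \<beta> x * pderivs \<alpha> (D1 f) x * pderivs \<beta> (D2 g) x)"
    by (intro bidiff_op_sum bidiff_op_prod diff_op_pderivs_comp assms a finite_idx_lists)
  then show ?thesis
    by (rule bidiff_op_cong) (simp add: a smooth_diff_op assms)
qed

section \<open>Formal power series with smooth coefficients\<close>

type_synonym 'n ser = "nat \<Rightarrow> 'n fn"

definition smooth_ser :: "'n::finite ser \<Rightarrow> bool" where
  "smooth_ser F \<longleftrightarrow> (\<forall>r. smooth (F r))"

definition ser_add :: "'n ser \<Rightarrow> 'n ser \<Rightarrow> 'n ser" where
  "ser_add F G = (\<lambda>r x. F r x + G r x)"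

definition ser_shift :: "'n ser \<Rightarrow> 'n ser" where
  "ser_shift F = (\<lambda>r. if r = 0 then (\<lambda>x. 0) else F (r - 1))"

definition ser_tail :: "'n ser \<Rightarrow> 'n ser" where
  "ser_tail F = (\<lambda>r. F (Suc r))"

definition ser_scale :: "real \<Rightarrow> 'n ser \<Rightarrow> 'n ser" where
  "ser_scale c F = (\<lambda>r x. c * F r x)"

definition ops_apply :: "(nat \<Rightarrow> 'n fn \<Rightarrow> 'n fn) \<Rightarrow> 'n ser \<Rightarrow> 'n ser" where
  "ops_apply T F = (\<lambda>r x. \<Sum>s\<le>r. T s (F (r - s)) x)"

definition ops_comp :: "(nat \<Rightarrow> 'n fn \<Rightarrow> 'n fn) \<Rightarrow> (nat \<Rightarrow> 'n fn \<Rightarrow> 'n fn) \<Rightarrow> nat \<Rightarrow> 'n fn \<Rightarrow> 'n fn" where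
  "ops_comp A B = (\<lambda>r f x. \<Sum>s\<le>r. A s (B (r - s) f) x)"

definition diff_ops :: "(nat \<Rightarrow> 'n::finite fn \<Rightarrow> 'n fn) \<Rightarrow> bool" where
  "diff_ops T \<longleftrightarrow> (\<forall>r. diff_op (T r))"

definition bidiff_ops :: "(nat \<Rightarrow> 'n::finite fn \<Rightarrow> 'n fn \<Rightarrow> 'n fn) \<Rightarrow> bool" where
  "bidiff_ops B \<longleftrightarrow> (\<forall>r. bidiff_op (B r))"

lemma smooth_ser_const: "smooth f \<Longrightarrow> smooth_ser (const_ser f)"
  by (simp add: smooth_ser_def const_ser_def smooth_const)

lemma smooth_ser_shift: "smooth_ser F \<Longrightarrow> smooth_ser (ser_shift F)"
  by (simp add: smooth_ser_def ser_shift_def smooth_const)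

lemma smooth_ser_tail: "smooth_ser F \<Longrightarrow> smooth_ser (ser_tail F)"
  by (simp add: smooth_ser_def ser_tail_def)

lemma ser_decompose: "F = ser_add (const_ser (F 0)) (ser_shift (ser_tail F))"
  by (auto simp: ser_add_def const_ser_def ser_shift_def ser_tail_def fun_eq_iff)

lemma ser_additive_shift_decompose:
  assumes add: "\<And>F F'. smooth_ser F \<Longrightarrow> smooth_ser F' \<Longrightarrow> \<Psi> (ser_add F F') = ser_add (\<Psi> F) (\<Psi> F')"
    and shift: "\<And>F. smooth_ser F \<Longrightarrow> \<Psi> (ser_shift F) = ser_shift (\<Psi> F)"
    and F: "smooth_ser F"
  shows "\<Psi> F = ser_add (\<Psi> (const_ser (F 0))) (ser_shift (\<Psi> (ser_tail F)))"
proof -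
  have "\<Psi> F = \<Psi> (ser_add (const_ser (F 0)) (ser_shift (ser_tail F)))"
    by (subst ser_decompose) simp
  also have "\<dots> = ser_add (\<Psi> (const_ser (F 0))) (\<Psi> (ser_shift (ser_tail F)))"
    using F by (intro add smooth_ser_const smooth_ser_shift smooth_ser_tail) (simp add: smooth_ser_def)
  finally show ?thesis by (simp add: shift smooth_ser_tail F)
qed

text \<open>An additive map on series commuting with multiplication by \<open>\<nu>\<close> is determined by its
  values on constant series: induct on the coefficient index using \<open>F = F 0 + \<nu> (ser_tail F)\<close>.\<close>

lemma ser_additive_shift_eqI:
  assumes add1: "\<And>F F'. smooth_ser F \<Longrightarrow> smooth_ser F' \<Longrightarrow> \<Psi>1 (ser_add F F') = ser_add (\<Psi>1 F) (\<Psi>1 F')"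
    and sh1: "\<And>F. smooth_ser F \<Longrightarrow> \<Psi>1 (ser_shift F) = ser_shift (\<Psi>1 F)"
    and add2: "\<And>F F'. smooth_ser F \<Longrightarrow> smooth_ser F' \<Longrightarrow> \<Psi>2 (ser_add F F') = ser_add (\<Psi>2 F) (\<Psi>2 F')"
    and sh2: "\<And>F. smooth_ser F \<Longrightarrow> \<Psi>2 (ser_shift F) = ser_shift (\<Psi>2 F)"
    and c: "\<And>f. smooth f \<Longrightarrow> \<Psi>1 (const_ser f) = \<Psi>2 (const_ser f)"
    and F: "smooth_ser F"
  shows "\<Psi>1 F = \<Psi>2 F"
proof -
  have "\<Psi>1 F r = \<Psi>2 F r" if "smooth_ser F" for F r
    using that
  proof (induct r arbitrary: F rule: less_induct)
    case (less r)
    have "smooth (F 0)" using less.prems by (simp add: smooth_ser_def)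
    then show ?case
      using less smooth_ser_tail[OF less.prems] c
        ser_additive_shift_decompose[OF add1 sh1 less.prems] ser_additive_shift_decompose[OF add2 sh2 less.prems]
      by (simp add: ser_add_def ser_shift_def)
  qed
  then show ?thesis using F by auto
qed

lemma smooth_ops_apply: "diff_ops T \<Longrightarrow> smooth_ser F \<Longrightarrow> smooth_ser (ops_apply T F)"
  unfolding smooth_ser_def ops_apply_def diff_ops_def
  by (intro allI smooth_sum finite_atMost) (simp add: smooth_diff_op)

lemma ops_apply_add:
  assumes "diff_ops T" "smooth_ser F" "smooth_ser G"
  shows "ops_apply T (ser_add F G) = ser_add (ops_apply T F) (ops_apply T G)"
  using assms unfolding smooth_ser_def ops_apply_def diff_ops_def ser_add_def
  by (simp add: fun_eq_iff diff_op_add_arg sum.distrib)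

lemma ops_apply_shift:
  assumes "diff_ops T"
  shows "ops_apply T (ser_shift F) = ser_shift (ops_apply T F)"
proof (rule ext)
  fix r
  show "ops_apply T (ser_shift F) r = ser_shift (ops_apply T F) r"
  proof (cases r)
    case 0
    then show ?thesis using assms by (simp add: ops_apply_def ser_shift_def diff_ops_def diff_op_zero_arg)
  next
    case (Suc m)
    have "ops_apply T (ser_shift F) r = (\<lambda>x. (\<Sum>s\<le>m. T s (ser_shift F (Suc m - s)) x) + T (Suc m) (ser_shift F 0) x)"
      unfolding ops_apply_def Suc by simp
    also have "\<dots> = (\<lambda>x. \<Sum>s\<le>m. T s (F (m - s)) x)"
      using assms by (simp add: ser_shift_def diff_ops_def diff_op_zero_arg Suc_diff_le)
    finally show ?thesis by (simp add: ser_shift_def ops_apply_def Suc)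
  qed
qed

lemma ops_apply_const:
  assumes "diff_ops T"
  shows "ops_apply T (const_ser f) r = T r f"
proof -
  have "ops_apply T (const_ser f) r = (\<lambda>x. \<Sum>s\<le>r. (if s = r then T r f x else 0))"
    unfolding ops_apply_def const_ser_def
    using assms by (intro ext sum.cong) (auto simp: diff_ops_def diff_op_zero_arg)
  then show ?thesis by simp
qed

lemma ops_apply_scale:
  assumes "diff_ops T" "smooth_ser F"
  shows "ops_apply T (ser_scale c F) = ser_scale c (ops_apply T F)"
  using assms unfolding ops_apply_def ser_scale_def diff_ops_def smooth_ser_def
  by (simp add: diff_op_cmult_arg sum_distrib_left)

lemma diff_ops_comp: "diff_ops A \<Longrightarrow> diff_ops B \<Longrightarrow> diff_ops (ops_comp A B)"
  unfolding diff_ops_def ops_comp_def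
  by (intro allI diff_op_sum finite_atMost) (simp add: diff_op_comp)

lemma ops_apply_comp:
  assumes A: "diff_ops A" and B: "diff_ops B" and F: "smooth_ser F"
  shows "ops_apply A (ops_apply B F) = ops_apply (ops_comp A B) F"
proof (rule ser_additive_shift_eqI[of "\<lambda>F. ops_apply A (ops_apply B F)" "ops_apply (ops_comp A B)"])
  fix F F' :: "'a ser" assume "smooth_ser F" "smooth_ser F'"
  then show "ops_apply A (ops_apply B (ser_add F F')) = ser_add (ops_apply A (ops_apply B F)) (ops_apply A (ops_apply B F'))"
    by (simp add: ops_apply_add A B smooth_ops_apply)
  show "ops_apply (ops_comp A B) (ser_add F F') = ser_add (ops_apply (ops_comp A B) F) (ops_apply (ops_comp A B) F')"
    using \<open>smooth_ser F\<close> \<open>smooth_ser F'\<close> by (simp add: ops_apply_add diff_ops_comp A B)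
next
  fix F :: "'a ser"
  show "ops_apply A (ops_apply B (ser_shift F)) = ser_shift (ops_apply A (ops_apply B F))" by (simp add: ops_apply_shift A B)
  show "ops_apply (ops_comp A B) (ser_shift F) = ser_shift (ops_apply (ops_comp A B) F)" by (simp add: ops_apply_shift A B diff_ops_comp)
next
  fix f :: "'a fn" assume f: "smooth f"
  show "ops_apply A (ops_apply B (const_ser f)) = ops_apply (ops_comp A B) (const_ser f)"
  proof (rule ext)
    fix r
    have "ops_apply A (ops_apply B (const_ser f)) r = (\<lambda>x. \<Sum>s\<le>r. A s (B (r - s) f) x)"
      unfolding ops_apply_def[of A] using B by (simp add: ops_apply_const)
    also have "\<dots> = ops_apply (ops_comp A B) (const_ser f) r"
      by (simp add: ops_apply_const diff_ops_comp A B) (simp add: ops_comp_def)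
    finally show "ops_apply A (ops_apply B (const_ser f)) r = ops_apply (ops_comp A B) (const_ser f) r" .
  qed
qed (rule F)

lemma smooth_ser_star:
  assumes "bidiff_ops B" "smooth_ser F" "smooth_ser G"
  shows "smooth_ser (ser_star B F G)"
  using assms unfolding smooth_ser_def ser_star_def bidiff_ops_def
  by (intro allI smooth_sum finite_atMost) (simp add: smooth_bidiff_op)

lemma ser_star_add_left:
  assumes "bidiff_ops B" "smooth_ser F" "smooth_ser F'" "smooth_ser G"
  shows "ser_star B (ser_add F F') G = ser_add (ser_star B F G) (ser_star B F' G)"
proof -
  have "B s (\<lambda>x. F t x + F' t x) (G u) = (\<lambda>x. B s (F t) (G u) x + B s (F' t) (G u) x)" for s t u
    using bidiff_op_linear_left[of "B s" "F t" "F' t" "G u" 1 1] assms by (simp add: bidiff_ops_def smooth_ser_def)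
  then show ?thesis unfolding ser_star_def ser_add_def by (simp add: sum.distrib)
qed

lemma ser_star_add_right:
  assumes "bidiff_ops B" "smooth_ser F" "smooth_ser G" "smooth_ser G'"
  shows "ser_star B F (ser_add G G') = ser_add (ser_star B F G) (ser_star B F G')"
proof -
  have "B s (F t) (\<lambda>x. G u x + G' u x) = (\<lambda>x. B s (F t) (G u) x + B s (F t) (G' u) x)" for s t u
    using bidiff_op_linear_right[of "B s" "F t" "G u" "G' u" 1 1] assms by (simp add: bidiff_ops_def smooth_ser_def)
  then show ?thesis unfolding ser_star_def ser_add_def by (simp add: sum.distrib)
qed

lemma ser_star_shift_left:
  assumes B: "bidiff_ops B" and G: "smooth_ser G"
  shows "ser_star B (ser_shift F) G = ser_shift (ser_star B F G)"
proof (intro ext)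
  fix r x
  have z: "B s (\<lambda>x. 0) (G u) = (\<lambda>x. 0)" for s u
    using B G by (simp add: bidiff_op_zero_left bidiff_ops_def smooth_ser_def)
  have inner: "(\<Sum>t\<le>Suc m - s. B s (ser_shift F t) (G (Suc m - s - t)) x) =
      (if s \<le> m then \<Sum>t\<le>m - s. B s (F t) (G (m - s - t)) x else 0)" for m s
  proof (cases "s \<le> m")
    case True
    then show ?thesis
      by (simp only: Suc_diff_le sum.atMost_Suc_shift) (simp add: ser_shift_def z)
  qed (simp add: ser_shift_def z)
  show "ser_star B (ser_shift F) G r x = ser_shift (ser_star B F G) r x"
  proof (cases r)
    case (Suc m)
    then show ?thesis
      by (simp only: ser_star_def inner) (auto simp: ser_shift_def ser_star_def intro!: sum.cong)
  qed (simp add: ser_star_def ser_shift_def z)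
qed

lemma ser_star_shift_right:
  assumes B: "bidiff_ops B" and F: "smooth_ser F"
  shows "ser_star B F (ser_shift G) = ser_shift (ser_star B F G)"
proof (intro ext)
  fix r x
  have z: "B s (F u) (\<lambda>x. 0) = (\<lambda>x. 0)" for s u
    using B F by (simp add: bidiff_op_zero_right bidiff_ops_def smooth_ser_def)
  have inner: "(\<Sum>t\<le>Suc m - s. B s (F t) (ser_shift G (Suc m - s - t)) x) =
      (if s \<le> m then \<Sum>t\<le>m - s. B s (F t) (G (m - s - t)) x else 0)" for m s
  proof (cases "s \<le> m")
    case True
    then show ?thesis
      by (simp only: Suc_diff_le sum.atMost_Suc) (auto simp: ser_shift_def z Suc_diff_le intro!: sum.cong)
  qed (simp add: ser_shift_def z)
  show "ser_star B F (ser_shift G) r x = ser_shift (ser_star B F G) r x"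
  proof (cases r)
    case (Suc m)
    then show ?thesis
      by (simp only: ser_star_def inner) (auto simp: ser_shift_def ser_star_def intro!: sum.cong)
  qed (simp add: ser_star_def ser_shift_def z)
qed

lemma ser_star_const:
  assumes "bidiff_ops B" "smooth f" "smooth g"
  shows "ser_star B (const_ser f) (const_ser g) r = B r f g"
proof -
  have z1: "B s (\<lambda>x. 0) h = (\<lambda>x. 0)" if "smooth h" for s h
    using assms that by (simp add: bidiff_op_zero_left bidiff_ops_def)
  have z2: "B s f (\<lambda>x. 0) = (\<lambda>x. 0)" for s
    using assms by (simp add: bidiff_op_zero_right bidiff_ops_def)
  have "ser_star B (const_ser f) (const_ser g) r =
      (\<lambda>x. \<Sum>s\<le>r. \<Sum>t\<le>r - s. (if s = r \<and> t = 0 then B r f g x else 0))"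
    unfolding ser_star_def const_ser_def
    by (intro ext sum.cong refl) (auto simp: z1 z2 assms smooth_const)
  also have "\<dots> = B r f g"
  proof (rule ext)
    fix x
    have "(\<Sum>t\<le>r - s. if s = r \<and> t = 0 then B r f g x else 0) = (if s = r then B r f g x else 0)" for s
      by (cases "s = r") auto
    then show "(\<Sum>s\<le>r. \<Sum>t\<le>r - s. if s = r \<and> t = 0 then B r f g x else 0) = B r f g x"
      by (simp add: sum.delta)
  qed
  finally show ?thesis .
qed

lemma ser_star_const_left:
  assumes "bidiff_ops B" "smooth f" "smooth_ser G"
  shows "ser_star B (const_ser f) G r = (\<lambda>x. \<Sum>s\<le>r. B s f (G (r - s)) x)"
proof -
  have z1: "B s (\<lambda>x. 0) h = (\<lambda>x. 0)" if "smooth h" for s h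
    using assms that by (simp add: bidiff_op_zero_left bidiff_ops_def)
  have "(\<Sum>t\<le>r - s. B s (const_ser f t) (G (r - s - t)) x) = B s f (G (r - s)) x" for s x
  proof -
    have "(\<Sum>t\<le>r - s. B s (const_ser f t) (G (r - s - t)) x) =
        (\<Sum>t\<le>r - s. if t = 0 then B s f (G (r - s)) x else 0)"
      using assms by (intro sum.cong refl) (auto simp: const_ser_def z1 smooth_ser_def)
    then show ?thesis by (simp add: sum.delta)
  qed
  then show ?thesis unfolding ser_star_def by simp
qed

lemma ser_star_const_right:
  assumes "bidiff_ops B" "smooth_ser F" "smooth g"
  shows "ser_star B F (const_ser g) r = (\<lambda>x. \<Sum>s\<le>r. B s (F (r - s)) g x)"
proof -
  have z2: "B s h (\<lambda>x. 0) = (\<lambda>x. 0)" if "smooth h" for s h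
    using assms that by (simp add: bidiff_op_zero_right bidiff_ops_def)
  have "(\<Sum>t\<le>r - s. B s (F t) (const_ser g (r - s - t)) x) = B s (F (r - s)) g x" if "s \<le> r" for s x
  proof -
    have "(\<Sum>t\<le>r - s. B s (F t) (const_ser g (r - s - t)) x) =
        (\<Sum>t\<le>r - s. if t = r - s then B s (F (r - s)) g x else 0)"
      using assms by (intro sum.cong refl) (auto simp: const_ser_def z2 smooth_ser_def)
    then show ?thesis by (simp add: sum.delta)
  qed
  then show ?thesis unfolding ser_star_def by (intro ext sum.cong) auto
qed

context
  fixes C :: "nat \<Rightarrow> 'n::finite fn \<Rightarrow> 'n fn \<Rightarrow> 'n fn"
  assumes C: "bidiff_ops C"
    and assoc: "\<And>r f g h. smooth f \<Longrightarrow> smooth g \<Longrightarrow> smooth h \<Longrightarrow>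
        (\<lambda>x. \<Sum>s\<le>r. C s (C (r - s) f g) h x) = (\<lambda>x. \<Sum>s\<le>r. C s f (C (r - s) g h) x)"
begin

lemma ser_star_assoc_const3:
  assumes f: "smooth f" and g: "smooth g" and h: "smooth h"
  shows "ser_star C (ser_star C (const_ser f) (const_ser g)) (const_ser h) =
         ser_star C (const_ser f) (ser_star C (const_ser g) (const_ser h))"
proof (rule ext)
  fix r
  have "ser_star C (ser_star C (const_ser f) (const_ser g)) (const_ser h) r = (\<lambda>x. \<Sum>s\<le>r. C s (C (r - s) f g) h x)"
    by (subst ser_star_const_right[OF C smooth_ser_star[OF C smooth_ser_const[OF f] smooth_ser_const[OF g]] h])
       (simp add: ser_star_const C f g)
  also have "\<dots> = (\<lambda>x. \<Sum>s\<le>r. C s f (C (r - s) g h) x)" by (rule assoc[OF f g h])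
  also have "\<dots> = ser_star C (const_ser f) (ser_star C (const_ser g) (const_ser h)) r"
    by (subst ser_star_const_left[OF C f smooth_ser_star[OF C smooth_ser_const[OF g] smooth_ser_const[OF h]]])
       (simp add: ser_star_const C g h)
  finally show "ser_star C (ser_star C (const_ser f) (const_ser g)) (const_ser h) r =
         ser_star C (const_ser f) (ser_star C (const_ser g) (const_ser h)) r" .
qed

lemma ser_star_assoc_const2:
  assumes f: "smooth f" and g: "smooth g" and H: "smooth_ser H"
  shows "ser_star C (ser_star C (const_ser f) (const_ser g)) H =
         ser_star C (const_ser f) (ser_star C (const_ser g) H)"
proof (rule ser_additive_shift_eqI[of "\<lambda>H. ser_star C (ser_star C (const_ser f) (const_ser g)) H"
      "\<lambda>H. ser_star C (const_ser f) (ser_star C (const_ser g) H)"])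
  fix H H' :: "'n ser" assume "smooth_ser H" "smooth_ser H'"
  then show "ser_star C (ser_star C (const_ser f) (const_ser g)) (ser_add H H') =
    ser_add (ser_star C (ser_star C (const_ser f) (const_ser g)) H) (ser_star C (ser_star C (const_ser f) (const_ser g)) H')"
    "ser_star C (const_ser f) (ser_star C (const_ser g) (ser_add H H')) =
    ser_add (ser_star C (const_ser f) (ser_star C (const_ser g) H)) (ser_star C (const_ser f) (ser_star C (const_ser g) H'))"
    by (simp_all add: ser_star_add_right smooth_ser_star smooth_ser_const C f g)
next
  fix H :: "'n ser"
  show "ser_star C (ser_star C (const_ser f) (const_ser g)) (ser_shift H) = ser_shift (ser_star C (ser_star C (const_ser f) (const_ser g)) H)"
    "ser_star C (const_ser f) (ser_star C (const_ser g) (ser_shift H)) = ser_shift (ser_star C (const_ser f) (ser_star C (const_ser g) H))"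
    by (simp_all add: ser_star_shift_right smooth_ser_star smooth_ser_const C f g)
qed (auto simp: ser_star_assoc_const3 f g H)

lemma ser_star_assoc_const1:
  assumes f: "smooth f" and G: "smooth_ser G" and H: "smooth_ser H"
  shows "ser_star C (ser_star C (const_ser f) G) H = ser_star C (const_ser f) (ser_star C G H)"
proof (rule ser_additive_shift_eqI[of "\<lambda>G. ser_star C (ser_star C (const_ser f) G) H"
      "\<lambda>G. ser_star C (const_ser f) (ser_star C G H)"])
  fix G G' :: "'n ser" assume "smooth_ser G" "smooth_ser G'"
  then show "ser_star C (ser_star C (const_ser f) (ser_add G G')) H =
    ser_add (ser_star C (ser_star C (const_ser f) G) H) (ser_star C (ser_star C (const_ser f) G') H)"
    "ser_star C (const_ser f) (ser_star C (ser_add G G') H) =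
    ser_add (ser_star C (const_ser f) (ser_star C G H)) (ser_star C (const_ser f) (ser_star C G' H))"
    by (simp_all add: ser_star_add_left ser_star_add_right smooth_ser_star smooth_ser_const C f H)
next
  fix G :: "'n ser"
  show "ser_star C (ser_star C (const_ser f) (ser_shift G)) H = ser_shift (ser_star C (ser_star C (const_ser f) G) H)"
    "ser_star C (const_ser f) (ser_star C (ser_shift G) H) = ser_shift (ser_star C (const_ser f) (ser_star C G H))"
    by (simp_all add: ser_star_shift_left ser_star_shift_right smooth_ser_star smooth_ser_const C f H)
qed (auto simp: ser_star_assoc_const2 f G H)

lemma ser_star_assoc:
  assumes F: "smooth_ser F" and G: "smooth_ser G" and H: "smooth_ser H"
  shows "ser_star C (ser_star C F G) H = ser_star C F (ser_star C G H)"
proof (rule ser_additive_shift_eqI[of "\<lambda>F. ser_star C (ser_star C F G) H"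
      "\<lambda>F. ser_star C F (ser_star C G H)"])
  fix F F' :: "'n ser" assume "smooth_ser F" "smooth_ser F'"
  then show "ser_star C (ser_star C (ser_add F F') G) H =
    ser_add (ser_star C (ser_star C F G) H) (ser_star C (ser_star C F' G) H)"
    "ser_star C (ser_add F F') (ser_star C G H) =
    ser_add (ser_star C F (ser_star C G H)) (ser_star C F' (ser_star C G H))"
    by (simp_all add: ser_star_add_left smooth_ser_star C G H)
next
  fix F :: "'n ser"
  show "ser_star C (ser_star C (ser_shift F) G) H = ser_shift (ser_star C (ser_star C F G) H)"
    "ser_star C (ser_shift F) (ser_star C G H) = ser_shift (ser_star C F (ser_star C G H))"
    by (simp_all add: ser_star_shift_left smooth_ser_star C G H)
qed (auto simp: ser_star_assoc_const1 F G H)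

end

function ops_rinv :: "(nat \<Rightarrow> 'n::finite fn \<Rightarrow> 'n fn) \<Rightarrow> nat \<Rightarrow> 'n fn \<Rightarrow> 'n fn" where
  "ops_rinv R r = (if r = 0 then (\<lambda>f. f) else (\<lambda>f x. - (\<Sum>s<r. R (r - s) (ops_rinv R s f) x)))"
  by auto
termination by (relation "Wellfounded.measure (\<lambda>(R, r). r)") auto

function ops_linv :: "(nat \<Rightarrow> 'n::finite fn \<Rightarrow> 'n fn) \<Rightarrow> nat \<Rightarrow> 'n fn \<Rightarrow> 'n fn" where
  "ops_linv R r = (if r = 0 then (\<lambda>f. f) else (\<lambda>f x. - (\<Sum>s<r. ops_linv R s (R (r - s) f) x)))"
  by auto
termination by (relation "Wellfounded.measure (\<lambda>(R, r). r)") auto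

declare ops_rinv.simps[simp del] ops_linv.simps[simp del]

lemma ops_rinv_0 [simp]: "ops_rinv R 0 = (\<lambda>f. f)" by (simp add: ops_rinv.simps)
lemma ops_linv_0 [simp]: "ops_linv R 0 = (\<lambda>f. f)" by (simp add: ops_linv.simps)
lemma ops_rinv_pos: "r > 0 \<Longrightarrow> ops_rinv R r = (\<lambda>f x. - (\<Sum>s<r. R (r - s) (ops_rinv R s f) x))"
  by (subst ops_rinv.simps) simp
lemma ops_linv_pos: "r > 0 \<Longrightarrow> ops_linv R r = (\<lambda>f x. - (\<Sum>s<r. ops_linv R s (R (r - s) f) x))"
  by (subst ops_linv.simps) simp

lemma diff_ops_rinv:
  assumes "diff_ops R" shows "diff_ops (ops_rinv R)"
proof -
  have "diff_op (ops_rinv R r)" for r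
  proof (induct r rule: less_induct)
    case (less r)
    show ?case
    proof (cases "r = 0")
      case True
      then show ?thesis by (simp add: diff_op_id)
    next
      case False
      have "diff_op (\<lambda>f x. (\<lambda>x. -1) x * (\<Sum>s<r. R (r - s) (ops_rinv R s f) x))"
        using less assms
        by (intro diff_op_mult diff_op_sum finite_lessThan smooth_const)
           (simp add: diff_op_comp diff_ops_def)
      then show ?thesis by (rule diff_op_cong) (use False in \<open>simp add: ops_rinv_pos\<close>)
    qed
  qed
  then show ?thesis by (simp add: diff_ops_def)
qed

lemma diff_ops_linv:
  assumes "diff_ops R" shows "diff_ops (ops_linv R)"
proof -
  have "diff_op (ops_linv R r)" for r
  proof (induct r rule: less_induct)
    case (less r)
    show ?case
    proof (cases "r = 0")
      case True
      then show ?thesis by (simp add: diff_op_id)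
    next
      case False
      have "diff_op (\<lambda>f x. (\<lambda>x. -1) x * (\<Sum>s<r. ops_linv R s (R (r - s) f) x))"
        using less assms
        by (intro diff_op_mult diff_op_sum finite_lessThan smooth_const)
           (simp add: diff_op_comp diff_ops_def)
      then show ?thesis by (rule diff_op_cong) (use False in \<open>simp add: ops_linv_pos\<close>)
    qed
  qed
  then show ?thesis by (simp add: diff_ops_def)
qed

lemma ops_apply_id: "ops_apply (\<lambda>r f. const_ser f r) F = F"
proof (rule ext)+
  fix r x
  have "(\<Sum>s\<le>r. const_ser (F (r - s)) s x) = (\<Sum>s\<le>r. if s = 0 then F r x else 0)"
    by (intro sum.cong) (auto simp: const_ser_def)
  then show "ops_apply (\<lambda>r f. const_ser f r) F r x = F r x" by (simp add: ops_apply_def sum.delta)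
qed

lemma ops_comp_rinv:
  assumes R_0: "R 0 = (\<lambda>f. f)"
  shows "ops_comp R (ops_rinv R) r f = const_ser f r"
proof (cases r)
  case 0
  then show ?thesis by (simp add: ops_comp_def R_0 const_ser_def)
next
  case (Suc m)
  have "ops_comp R (ops_rinv R) r f = (\<lambda>x. ops_rinv R (Suc m) f x + (\<Sum>s\<le>m. R (Suc s) (ops_rinv R (m - s) f) x))"
    unfolding ops_comp_def Suc by (simp only: sum.atMost_Suc_shift) (simp add: R_0)
  also have "\<dots> = (\<lambda>x. 0)"
  proof (rule ext)
    fix x
    have "(\<Sum>s<Suc m. R (Suc m - s) (ops_rinv R s f) x) = (\<Sum>i<Suc m. R (Suc m - (Suc m - Suc i)) (ops_rinv R (Suc m - Suc i) f) x)"
      by (rule sum.nat_diff_reindex[symmetric])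
    also have "\<dots> = (\<Sum>s\<le>m. R (Suc s) (ops_rinv R (m - s) f) x)"
      by (simp add: lessThan_Suc_atMost Suc_diff_le)
    finally show "ops_rinv R (Suc m) f x + (\<Sum>s\<le>m. R (Suc s) (ops_rinv R (m - s) f) x) = 0"
      by (simp add: ops_rinv_pos)
  qed
  finally show ?thesis by (simp add: Suc const_ser_def)
qed

lemma ops_comp_linv:
  assumes R_0: "R 0 = (\<lambda>f. f)"
  shows "ops_comp (ops_linv R) R r f = const_ser f r"
proof (cases r)
  case 0
  then show ?thesis by (simp add: ops_comp_def R_0 const_ser_def)
next
  case (Suc m)
  have "ops_comp (ops_linv R) R r f = (\<lambda>x. (\<Sum>s<Suc m. ops_linv R s (R (Suc m - s) f) x) + ops_linv R (Suc m) f x)"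
    unfolding ops_comp_def Suc by (simp add: R_0 lessThan_Suc_atMost[symmetric])
  also have "\<dots> = (\<lambda>x. 0)"
    by (simp add: ops_linv_pos)
  finally show ?thesis by (simp add: Suc const_ser_def)
qed

text \<open>\<open>ops_linv\<close> only serves to show that the right inverse is also a left inverse.\<close>

lemma ops_apply_inverse:
  assumes diff_ops_R: "diff_ops R" and R_0: "R 0 = (\<lambda>f. f)" and F: "smooth_ser F"
  shows "ops_apply R (ops_apply (ops_rinv R) F) = F" and "ops_apply (ops_rinv R) (ops_apply R F) = F"
proof -
  have e1: "ops_comp R (ops_rinv R) = (\<lambda>r f. const_ser f r)" using ops_comp_rinv[of R, OF R_0] by (intro ext) simp
  have e2: "ops_comp (ops_linv R) R = (\<lambda>r f. const_ser f r)" using ops_comp_linv[of R, OF R_0] by (intro ext) simp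
  have RT: "ops_apply R (ops_apply (ops_rinv R) G) = G" if "smooth_ser G" for G
    using that by (simp add: ops_apply_comp diff_ops_R diff_ops_rinv e1 ops_apply_id)
  have LR: "ops_apply (ops_linv R) (ops_apply R G) = G" if "smooth_ser G" for G
    using that by (simp add: ops_apply_comp diff_ops_R diff_ops_linv e2 ops_apply_id)
  show "ops_apply R (ops_apply (ops_rinv R) F) = F" by (rule RT[OF F])
  have s: "smooth_ser (ops_apply (ops_rinv R) (ops_apply R F))" by (intro smooth_ops_apply diff_ops_rinv diff_ops_R F)
  have "ops_apply (ops_rinv R) (ops_apply R F) = ops_apply (ops_linv R) (ops_apply R (ops_apply (ops_rinv R) (ops_apply R F)))"
    by (rule LR[OF s, symmetric])
  also have "\<dots> = ops_apply (ops_linv R) (ops_apply R F)" by (simp add: RT smooth_ops_apply diff_ops_R F)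
  also have "\<dots> = F" by (rule LR[OF F])
  finally show "ops_apply (ops_rinv R) (ops_apply R F) = F" .
qed

section \<open>Flatness and monomials\<close>

definition flat_to_order :: "real^'n::finite \<Rightarrow> nat \<Rightarrow> 'n fn \<Rightarrow> bool" where
  "flat_to_order x0 m f \<longleftrightarrow> (\<forall>\<beta>. length \<beta> < m \<longrightarrow> pderivs \<beta> f x0 = 0)"

lemma flat_to_order_mono: "m' \<le> m \<Longrightarrow> flat_to_order x0 m f \<Longrightarrow> flat_to_order x0 m' f"
  by (auto simp: flat_to_order_def)

lemma flat_to_order_1_iff: "flat_to_order x0 1 f \<longleftrightarrow> f x0 = 0"
  by (auto simp: flat_to_order_def)

lemma flat_to_order_sum:
  assumes "finite A" "\<And>a. a \<in> A \<Longrightarrow> smooth (h a)" "\<And>a. a \<in> A \<Longrightarrow> flat_to_order x0 m (h a)"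
  shows "flat_to_order x0 m (\<lambda>x. \<Sum>a\<in>A. h a x)"
  using assms by (auto simp: flat_to_order_def pderivs_sum)

lemma flat_to_order_pderivs:
  "flat_to_order x0 (m + length \<beta>) f \<Longrightarrow> flat_to_order x0 m (pderivs \<beta> f)"
  by (simp add: flat_to_order_def flip: pderivs_append)

lemma flat_to_order_mult:
  assumes u: "smooth u" "flat_to_order x0 p u" and G: "smooth G" "flat_to_order x0 m G"
  shows "flat_to_order x0 (p + m) (\<lambda>x. u x * G x)"
  unfolding flat_to_order_def
proof (intro allI impI)
  fix \<beta> :: "'a list" assume l: "length \<beta> < p + m"
  have "pderivs a u x0 * pderivs b G x0 = 0" if "(a, b) \<in> set (leibniz_splits \<beta>)" for a b
  proof -
    have "length a < p \<or> length b < m" using leibniz_splits_length[OF that] l by linarith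
    then show ?thesis using u G by (auto simp: flat_to_order_def)
  qed
  then have "(\<Sum>(a, b)\<leftarrow>leibniz_splits \<beta>. pderivs a u x0 * pderivs b G x0) = (\<Sum>_\<leftarrow>leibniz_splits \<beta>. 0)"
    by (intro arg_cong[where f=sum_list] map_cong) auto
  then show "pderivs \<beta> (\<lambda>x. u x * G x) x0 = 0"
    by (simp add: pderivs_mult u G)
qed

lemma flat_to_order_bidiff_op:
  assumes "bidiff_op B"
  obtains k where "\<And>x0 f G m. smooth f \<Longrightarrow> smooth G \<Longrightarrow> flat_to_order x0 (m + k) G \<Longrightarrow>
    flat_to_order x0 m (B f G)"
proof -
  obtain k a where a: "\<And>\<alpha> \<beta>. smooth (a \<alpha> \<beta>)"
    "\<And>f g. smooth f \<Longrightarrow> smooth g \<Longrightarrow>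
       B f g = (\<lambda>x. \<Sum>\<alpha>\<in>idx_lists k. \<Sum>\<beta>\<in>idx_lists k. a \<alpha> \<beta> x * pderivs \<alpha> f x * pderivs \<beta> g x)"
    using assms by (rule bidiff_opE) blast
  have "flat_to_order x0 m (B f G)"
    if f: "smooth f" and G: "smooth G" and flat: "flat_to_order x0 (m + k) G" for x0 f G m
  proof -
    have "flat_to_order x0 m (\<lambda>x. (a \<alpha> \<beta> x * pderivs \<alpha> f x) * pderivs \<beta> G x)"
      if "\<beta> \<in> idx_lists k" for \<alpha> \<beta>
    proof -
      have "flat_to_order x0 (m + length \<beta>) G"
        using flat_to_order_mono[OF _ flat, of "m + length \<beta>"] that by (simp add: idx_lists_def)
      then have "flat_to_order x0 m (pderivs \<beta> G)" by (rule flat_to_order_pderivs)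
      then show ?thesis
        using flat_to_order_mult[of _ x0 0 "pderivs \<beta> G" m]
        by (simp add: flat_to_order_def smooth_mult a smooth_pderivs f G)
    qed
    then have "flat_to_order x0 m
        (\<lambda>x. \<Sum>\<alpha>\<in>idx_lists k. \<Sum>\<beta>\<in>idx_lists k. (a \<alpha> \<beta> x * pderivs \<alpha> f x) * pderivs \<beta> G x)"
      by (intro flat_to_order_sum finite_idx_lists smooth_sum smooth_mult a smooth_pderivs f G)
    then show ?thesis by (simp add: a f G)
  qed
  then show thesis by (rule that)
qed

lemma sum_permutes_eq_sum_permutations_of_set:
  "(\<Sum>\<sigma>\<in>{\<sigma>. \<sigma> permutes {0..<k}}. F (map \<sigma> [0..<k])) = (\<Sum>ps\<in>permutations_of_set {0..<k}. F ps)"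
proof (rule sum.reindex_bij_witness[where i="\<lambda>ps n. if n < k then ps ! n else n" and j="\<lambda>\<sigma>. map \<sigma> [0..<k]"])
  fix \<sigma> assume s: "\<sigma> \<in> {\<sigma>. \<sigma> permutes {0..<k}}"
  then have p: "\<sigma> permutes {0..<k}" by simp
  show "(\<lambda>n. if n < k then map \<sigma> [0..<k] ! n else n) = \<sigma>"
  proof
    fix n show "(if n < k then map \<sigma> [0..<k] ! n else n) = \<sigma> n"
      using permutes_not_in[OF p, of n] by auto
  qed
  have "set (map \<sigma> [0..<k]) = {0..<k}" using permutes_image[OF p] by simp
  moreover have "distinct (map \<sigma> [0..<k])"
    using permutes_inj_on[OF p] by (simp add: distinct_map)
  ultimately show "map \<sigma> [0..<k] \<in> permutations_of_set {0..<k}" by (rule permutations_of_setI)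
  show "F (map \<sigma> [0..<k]) = F (map \<sigma> [0..<k])" ..
next
  fix ps assume ps: "ps \<in> permutations_of_set {0..<k}"
  have l: "length ps = k" using length_finite_permutations_of_set[OF ps] by simp
  show "map (\<lambda>n. if n < k then ps ! n else n) [0..<k] = ps"
    using l by (intro nth_equalityI) auto
  have d: "distinct ps" and st: "set ps = {0..<k}" using permutations_of_setD[OF ps] by auto
  have "bij_betw ((!) ps) {..<length ps} (set ps)" by (rule bij_betw_nth[OF d refl refl])
  then have b: "bij_betw ((!) ps) {0..<k} {0..<k}" using l st by (simp add: lessThan_atLeast0)
  have "bij_betw (\<lambda>n. if n < k then ps ! n else n) {0..<k} {0..<k}"
    by (rule bij_betw_cong[THEN iffD1, OF _ b]) auto
  then show "(\<lambda>n. if n < k then ps ! n else n) \<in> {\<sigma>. \<sigma> permutes {0..<k}}"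
    by (auto intro!: bij_imp_permutes)
qed

lemma sum_permutations_of_set_remove:
  assumes "finite J" "J \<noteq> {}"
  shows "(\<Sum>ps\<in>permutations_of_set J. f ps) = (\<Sum>j\<in>J. \<Sum>ps\<in>permutations_of_set (J - {j}). f (j # ps))"
proof -
  have "(\<Sum>ps\<in>permutations_of_set J. f ps) =
      (\<Sum>j\<in>J. \<Sum>ps\<in>(#) j ` permutations_of_set (J - {j}). f ps)"
    unfolding permutations_of_set_nonempty[OF assms(2)] by (rule sum.UNION_disjoint) (auto simp: assms(1))
  then show ?thesis by (simp add: sum.reindex)
qed

lemma sum_Pow_remove_swap:
  assumes "finite J"
  shows "(\<Sum>j\<in>J. \<Sum>K\<in>Pow (J - {j}). f j K) = (\<Sum>K\<in>Pow J. \<Sum>j\<in>J - K. f j K)"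
proof -
  have "(\<Sum>j\<in>J. \<Sum>K\<in>Pow (J - {j}). f j K) = (\<Sum>j\<in>J. \<Sum>K\<in>{K \<in> Pow J. j \<notin> K}. f j K)"
    by (intro sum.cong) auto
  also have "\<dots> = (\<Sum>K\<in>Pow J. \<Sum>j\<in>{j \<in> J. j \<notin> K}. f j K)"
    by (rule sum.swap_restrict) (use assms in auto)
  finally show ?thesis by (simp add: set_diff_eq)
qed

lemma sum_Pow_remove_insert:
  assumes "finite J"
  shows "(\<Sum>j\<in>J. \<Sum>K\<in>Pow (J - {j}). f j (insert j K)) = (\<Sum>K\<in>Pow J. \<Sum>j\<in>K. f j K)"
proof -
  have "(\<Sum>K\<in>Pow (J - {j}). f j (insert j K)) = (\<Sum>K\<in>{K \<in> Pow J. j \<in> K}. f j K)" if "j \<in> J" for j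
    by (rule sum.reindex_bij_witness[where i="\<lambda>K. K - {j}" and j="insert j"]) (use that in auto)
  then have "(\<Sum>j\<in>J. \<Sum>K\<in>Pow (J - {j}). f j (insert j K)) = (\<Sum>j\<in>J. \<Sum>K\<in>{K \<in> Pow J. j \<in> K}. f j K)"
    by (rule sum.cong[OF refl])
  also have "\<dots> = (\<Sum>K\<in>Pow J. \<Sum>j\<in>{j \<in> J. j \<in> K}. f j K)"
    by (rule sum.swap_restrict) (use assms in auto)
  also have "\<dots> = (\<Sum>K\<in>Pow J. \<Sum>j\<in>K. f j K)"
    by (intro sum.cong) auto
  finally show ?thesis .
qed

definition monomial :: "'n::finite list \<Rightarrow> 'n fn" where
  "monomial is = (\<lambda>x. \<Prod>j<length is. x $ (is ! j))"

definition monomial_on :: "('a \<Rightarrow> 'n::finite) \<Rightarrow> 'a set \<Rightarrow> 'n fn" where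
  "monomial_on l A = (\<lambda>x. \<Prod>j\<in>A. x $ l j)"

lemma monomial_eq_monomial_on: "monomial is = monomial_on (\<lambda>j. is ! j) {0..<length is}"
  by (simp add: monomial_def monomial_on_def lessThan_atLeast0)

lemma smooth_monomial_on: "finite A \<Longrightarrow> smooth (monomial_on l A)"
proof -
  assume "finite A"
  moreover have "monomial_on l A = (\<lambda>x. \<Prod>j\<in>A. coord (l j) x)" by (simp add: monomial_on_def coord_def)
  ultimately show ?thesis by (simp add: smooth_prod smooth_coord)
qed

lemma smooth_monomial: "smooth (monomial is)"
  by (simp add: monomial_eq_monomial_on smooth_monomial_on)

lemma partial_monomial_on:
  assumes "finite A"
  shows "partial b (monomial_on l A) = (\<lambda>x. \<Sum>j\<in>{j\<in>A. l j = b}. monomial_on l (A - {j}) x)"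
  using assms
proof (induct A rule: finite_induct)
  case empty
  then show ?case by (simp add: monomial_on_def)
next
  case (insert a A)
  have e: "monomial_on l (insert a A) = (\<lambda>x. coord (l a) x * monomial_on l A x)"
    using insert by (simp add: monomial_on_def coord_def)
  show ?case
  proof
    fix x
    have "partial b (monomial_on l (insert a A)) x = partial b (coord (l a)) x * monomial_on l A x + coord (l a) x * partial b (monomial_on l A) x"
      unfolding e by (rule partial_mult) (auto intro: smooth_differentiable smooth_coord smooth_monomial_on insert)
    also have "\<dots> = (if l a = b then monomial_on l A x else 0) + x $ l a * (\<Sum>j\<in>{j\<in>A. l j = b}. monomial_on l (A - {j}) x)"
      by (simp add: partial_coord insert) (simp add: coord_def)
    also have "\<dots> = (\<Sum>j\<in>{j\<in>insert a A. l j = b}. monomial_on l (insert a A - {j}) x)"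
    proof -
      have m: "monomial_on l (insert a A - {j}) x = x $ l a * monomial_on l (A - {j}) x" if "j \<in> A" for j
      proof -
        have "insert a A - {j} = insert a (A - {j})" using that insert by auto
        then show ?thesis using insert by (simp add: monomial_on_def)
      qed
      have s: "(\<Sum>j\<in>{j\<in>A. l j = b}. monomial_on l (insert a A - {j}) x) = x $ l a * (\<Sum>j\<in>{j\<in>A. l j = b}. monomial_on l (A - {j}) x)"
        by (simp add: m sum_distrib_left)
      show ?thesis
      proof (cases "l a = b")
        case True
        then have "{j\<in>insert a A. l j = b} = insert a {j\<in>A. l j = b}" by auto
        then show ?thesis using True insert s by simp
      next
        case False
        then have "{j\<in>insert a A. l j = b} = {j\<in>A. l j = b}" by auto
        then show ?thesis using False s by simp
      qed
    qed
    finally show "partial b (monomial_on l (insert a A)) x = (\<Sum>j\<in>{j\<in>insert a A. l j = b}. monomial_on l (insert a A - {j}) x)" .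
  qed
qed

definition diff_choices :: "('a \<Rightarrow> 'n) \<Rightarrow> 'a set \<Rightarrow> 'n list \<Rightarrow> 'a list set" where
  "diff_choices l A \<beta> = {ps. distinct ps \<and> set ps \<subseteq> A \<and> map l ps = \<beta>}"

lemma finite_diff_choices: "finite A \<Longrightarrow> finite (diff_choices l A \<beta>)"
proof -
  assume "finite A"
  then have "finite {ps. set ps \<subseteq> A \<and> length ps = length \<beta>}" by (rule finite_lists_length_eq)
  moreover have "diff_choices l A \<beta> \<subseteq> {ps. set ps \<subseteq> A \<and> length ps = length \<beta>}" by (auto simp: diff_choices_def)
  ultimately show ?thesis by (rule finite_subset[rotated])
qed

lemma pderivs_monomial_on:
  assumes A: "finite A"
  shows "pderivs \<beta> (monomial_on l A) = (\<lambda>x. \<Sum>ps\<in>diff_choices l A \<beta>. monomial_on l (A - set ps) x)"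
proof (induct \<beta>)
  case Nil
  have "diff_choices l A [] = {[]}" by (auto simp: diff_choices_def)
  then show ?case by simp
next
  case (Cons b \<beta>)
  show ?case
  proof
    fix x
    have "pderivs (b # \<beta>) (monomial_on l A) x = partial b (\<lambda>x. \<Sum>ps\<in>diff_choices l A \<beta>. monomial_on l (A - set ps) x) x"
      by (simp add: Cons)
    also have "\<dots> = (\<Sum>ps\<in>diff_choices l A \<beta>. partial b (monomial_on l (A - set ps)) x)"
      by (rule partial_sum) (auto intro: finite_diff_choices A smooth_differentiable smooth_monomial_on)
    also have "\<dots> = (\<Sum>ps\<in>diff_choices l A \<beta>. \<Sum>j\<in>{j\<in>A - set ps. l j = b}. monomial_on l (A - set ps - {j}) x)"
      by (simp add: partial_monomial_on A)
    also have "\<dots> = (\<Sum>p\<in>(SIGMA ps:diff_choices l A \<beta>. {j\<in>A - set ps. l j = b}). monomial_on l (A - set (fst p) - {snd p}) x)"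
      by (subst sum.Sigma) (auto simp: finite_diff_choices[OF A] A split_def)
    also have "\<dots> = (\<Sum>qs\<in>diff_choices l A (b # \<beta>). monomial_on l (A - set qs) x)"
    proof (rule sum.reindex_bij_witness[where i="\<lambda>qs. (tl qs, hd qs)" and j="\<lambda>p. snd p # fst p"])
      fix p assume "p \<in> (SIGMA ps:diff_choices l A \<beta>. {j\<in>A - set ps. l j = b})"
      then show "(tl (snd p # fst p), hd (snd p # fst p)) = p"
        "snd p # fst p \<in> diff_choices l A (b # \<beta>)"
        by (auto simp: diff_choices_def)
      have "A - set (snd p # fst p) = A - set (fst p) - {snd p}" by auto
      then show "monomial_on l (A - set (snd p # fst p)) x = monomial_on l (A - set (fst p) - {snd p}) x" by simp
    next
      fix qs assume q: "qs \<in> diff_choices l A (b # \<beta>)"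
      then obtain j ps where qs: "qs = j # ps" by (cases qs) (auto simp: diff_choices_def)
      show "snd (tl qs, hd qs) # fst (tl qs, hd qs) = qs" using qs by simp
      show "(tl qs, hd qs) \<in> (SIGMA ps:diff_choices l A \<beta>. {j\<in>A - set ps. l j = b})"
        using q qs by (auto simp: diff_choices_def)
    qed
    finally show "pderivs (b # \<beta>) (monomial_on l A) x = (\<Sum>qs\<in>diff_choices l A (b # \<beta>). monomial_on l (A - set qs) x)" .
  qed
qed

lemma sum_diff_choices_regroup:
  fixes l :: "'a \<Rightarrow> 'n::finite"
  assumes J: "finite J"
  shows "(\<Sum>\<beta>\<in>idx_lists N. \<Sum>ps\<in>diff_choices l J \<beta>. F ps) =
    (\<Sum>K\<in>{K\<in>Pow J. card K \<le> N}. \<Sum>ps\<in>permutations_of_set K. F ps)"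
proof -
  define D where "D = {ps. distinct ps \<and> set ps \<subseteq> J \<and> length ps \<le> N}"
  have fD: "finite D"
    using finite_lists_length_le[OF J, of N] by (rule finite_subset[rotated]) (auto simp: D_def)
  have "(\<Sum>\<beta>\<in>idx_lists N. \<Sum>ps\<in>diff_choices l J \<beta>. F ps) = (\<Sum>\<beta>\<in>idx_lists N. \<Sum>ps\<in>{ps \<in> D. map l ps = \<beta>}. F ps)"
    by (intro sum.cong refl) (auto simp: diff_choices_def D_def idx_lists_def)
  also have "\<dots> = (\<Sum>ps\<in>D. F ps)"
    by (rule sum.group[OF fD finite_idx_lists]) (auto simp: D_def idx_lists_def)
  also have "\<dots> = (\<Sum>K\<in>{K\<in>Pow J. card K \<le> N}. \<Sum>ps\<in>{ps \<in> D. set ps = K}. F ps)"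
    by (rule sum.group[symmetric, OF fD]) (use J in \<open>auto simp: D_def distinct_card\<close>)
  also have "\<dots> = (\<Sum>K\<in>{K\<in>Pow J. card K \<le> N}. \<Sum>ps\<in>permutations_of_set K. F ps)"
    by (intro sum.cong refl) (auto simp: D_def permutations_of_set_def distinct_card)
  finally show ?thesis .
qed

section \<open>The sun-product cochains are differential operators\<close>

fun star_word :: "(nat \<Rightarrow> 'n::finite fn \<Rightarrow> 'n fn \<Rightarrow> 'n fn) \<Rightarrow> 'n fn list \<Rightarrow> 'n ser" where
  "star_word C [] = const_ser (\<lambda>x. 1)"
| "star_word C (f # fs) = ser_star C (const_ser f) (star_word C fs)"

definition sym_star :: "(nat \<Rightarrow> 'n::finite fn \<Rightarrow> 'n fn \<Rightarrow> 'n fn) \<Rightarrow> ('a \<Rightarrow> 'n fn) \<Rightarrow> 'a set \<Rightarrow> 'n ser" where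
  "sym_star C u J = (\<lambda>r x. (1 / fact (card J)) * (\<Sum>ps\<in>permutations_of_set J. star_word C (map u ps) r x))"

definition star_left :: "(nat \<Rightarrow> 'n::finite fn \<Rightarrow> 'n fn \<Rightarrow> 'n fn) \<Rightarrow> 'n fn \<Rightarrow> 'n ser \<Rightarrow> 'n ser" where
  "star_left C f G = (\<lambda>r x. \<Sum>s\<le>r. C s f (G (r - s)) x)"

lemma sun_cochain_ops_apply:
  assumes T: "diff_ops T" and C': "\<And>js. star_list C' js = ops_apply T (star_list C js)"
    and smooth: "\<And>js. smooth_ser (star_list C js)"
  shows "sun_cochain C' r is = ops_apply T (\<lambda>q. sun_cochain C q is) r"
proof -
  let ?S = "{\<sigma>. \<sigma> permutes {0..<length is}}"
  let ?L = "\<lambda>\<sigma>. map (\<lambda>j. is ! \<sigma> j) [0..<length is]"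
  let ?c = "1 / fact (length is) :: real"
  have fS: "finite ?S" by (rule finite_permutations) simp
  have lin: "T s (\<lambda>x. ?c * (\<Sum>\<sigma>\<in>?S. star_list C (?L \<sigma>) q x)) =
      (\<lambda>x. ?c * (\<Sum>\<sigma>\<in>?S. T s (star_list C (?L \<sigma>) q) x))" for s q
  proof -
    have sm: "smooth (star_list C (?L \<sigma>) q)" for \<sigma> using smooth by (simp add: smooth_ser_def)
    have Ts: "diff_op (T s)" using T by (simp add: diff_ops_def)
    have "T s (\<lambda>x. ?c * (\<Sum>\<sigma>\<in>?S. star_list C (?L \<sigma>) q x)) =
        (\<lambda>x. ?c * T s (\<lambda>x. \<Sum>\<sigma>\<in>?S. star_list C (?L \<sigma>) q x) x)"
      by (rule diff_op_cmult_arg[OF Ts smooth_sum[OF fS sm]])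
    then show ?thesis by (simp add: diff_op_sum_arg[OF Ts fS sm])
  qed
  have "sun_cochain C' r is = (\<lambda>x. ?c * (\<Sum>\<sigma>\<in>?S. \<Sum>s\<le>r. T s (star_list C (?L \<sigma>) (r - s)) x))"
    by (simp add: sun_cochain_def C' ops_apply_def)
  also have "\<dots> = (\<lambda>x. \<Sum>s\<le>r. ?c * (\<Sum>\<sigma>\<in>?S. T s (star_list C (?L \<sigma>) (r - s)) x))"
    by (simp add: sum.swap[of _ ?S] sum_distrib_left)
  also have "\<dots> = ops_apply T (\<lambda>q. sun_cochain C q is) r"
    by (simp only: ops_apply_def sun_cochain_def lin)
  finally show ?thesis .
qed

locale star_prod =
  fixes P :: "'n::finite fn \<Rightarrow> 'n fn \<Rightarrow> 'n fn"
    and C :: "nat \<Rightarrow> 'n fn \<Rightarrow> 'n fn \<Rightarrow> 'n fn"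
  assumes SP: "star_product P C"
begin

lemma bidiff_C: "bidiff_ops C"
  using SP by (simp add: star_product_def bidiff_ops_def)

lemma bidiff_C_r: "bidiff_op (C s)"
  using SP by (simp add: star_product_def)

lemma C_0: "smooth f \<Longrightarrow> smooth g \<Longrightarrow> C 0 f g = (\<lambda>x. f x * g x)"
  using SP by (simp add: star_product_def)

lemma C_const_left: "r \<ge> 1 \<Longrightarrow> smooth f \<Longrightarrow> C r (\<lambda>x. c) f = (\<lambda>x. 0)"
  using SP by (simp add: star_product_def)

lemma C_const_right: "r \<ge> 1 \<Longrightarrow> smooth f \<Longrightarrow> C r f (\<lambda>x. c) = (\<lambda>x. 0)"
  using SP by (simp add: star_product_def)

lemma C_assoc:
  "smooth f \<Longrightarrow> smooth g \<Longrightarrow> smooth h \<Longrightarrow>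
    (\<lambda>x. \<Sum>s\<le>r. C s (C (r - s) f g) h x) = (\<lambda>x. \<Sum>s\<le>r. C s f (C (r - s) g h) x)"
  using SP by (simp add: star_product_def)

lemma C_antisym: "smooth f \<Longrightarrow> smooth g \<Longrightarrow> (\<lambda>x. C 1 f g x - C 1 g f x) = (\<lambda>x. 2 * P f g x)"
  using SP by (simp add: star_product_def)

lemma smooth_ser_star_word: "(\<And>f. f \<in> set fs \<Longrightarrow> smooth f) \<Longrightarrow> smooth_ser (star_word C fs)"
  by (induct fs) (auto simp: smooth_ser_const smooth_const smooth_ser_star bidiff_C)

lemma ser_star_const_left_eq_star_left: "smooth f \<Longrightarrow> smooth_ser G \<Longrightarrow> ser_star C (const_ser f) G = star_left C f G"
  by (rule ext) (simp add: ser_star_const_left bidiff_C star_left_def)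

lemma ser_star_scalar_left:
  assumes "smooth_ser G" shows "ser_star C (const_ser (\<lambda>x. c)) G = ser_scale c G"
proof (rule ext)
  fix r
  have "ser_star C (const_ser (\<lambda>x. c)) G r = (\<lambda>x. \<Sum>s\<le>r. C s (\<lambda>x. c) (G (r - s)) x)"
    by (rule ser_star_const_left[OF bidiff_C smooth_const assms])
  also have "\<dots> = (\<lambda>x. \<Sum>s\<le>r. if s = 0 then c * G r x else 0)"
    using assms by (intro ext sum.cong refl) (auto simp: C_0 C_const_left smooth_const smooth_ser_def)
  also have "\<dots> = ser_scale c G r" by (simp add: ser_scale_def sum.delta)
  finally show "ser_star C (const_ser (\<lambda>x. c)) G r = ser_scale c G r" .
qed

lemma ser_star_scalar_right:
  assumes "smooth_ser G" shows "ser_star C G (const_ser (\<lambda>x. c)) = ser_scale c G"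
proof (rule ext)
  fix r
  have "ser_star C G (const_ser (\<lambda>x. c)) r = (\<lambda>x. \<Sum>s\<le>r. C s (G (r - s)) (\<lambda>x. c) x)"
    by (rule ser_star_const_right[OF bidiff_C assms smooth_const])
  also have "\<dots> = (\<lambda>x. \<Sum>s\<le>r. if s = 0 then c * G r x else 0)"
    using assms by (intro ext sum.cong refl) (auto simp: C_0 C_const_right smooth_const smooth_ser_def mult.commute)
  also have "\<dots> = ser_scale c G r" by (simp add: ser_scale_def sum.delta)
  finally show "ser_star C G (const_ser (\<lambda>x. c)) r = ser_scale c G r" .
qed

lemma smooth_ser_star_list: "smooth_ser (star_list C is)"
proof (induct "is")
  case Nil
  then show ?case by (simp add: smooth_ser_const smooth_const)
next
  case (Cons i "is")
  then show ?case by (simp add: smooth_ser_star bidiff_C smooth_ser_const smooth_coord)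
qed

lemma sun_cochain_nil: "sun_cochain C q [] = star_list C [] q"
  by (simp add: sun_cochain_def)

lemma sun_cochain_single: "sun_cochain C q [i] = star_list C [i] q"
proof -
  have "{\<sigma>. \<sigma> permutes {0..<Suc 0}} = {id}" by auto
  then show ?thesis by (simp add: sun_cochain_def)
qed

lemma star_left_linear:
  assumes f: "smooth f" and A: "finite A" and S: "\<And>a. a \<in> A \<Longrightarrow> smooth_ser (S a)"
  shows "star_left C f (\<lambda>r x. \<Sum>a\<in>A. c a * S a r x) = (\<lambda>r x. \<Sum>a\<in>A. c a * star_left C f (S a) r x)"
proof (intro ext)
  fix r x
  have sm: "\<And>a q. a \<in> A \<Longrightarrow> smooth (S a q)" using S by (simp add: smooth_ser_def)
  have e: "C s f (\<lambda>x. \<Sum>a\<in>A. c a * S a q x) = (\<lambda>x. \<Sum>a\<in>A. c a * C s f (S a q) x)" for s q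
  proof -
    have "C s f (\<lambda>x. \<Sum>a\<in>A. c a * S a q x) = (\<lambda>x. \<Sum>a\<in>A. C s f (\<lambda>x. c a * S a q x) x)"
      by (rule bidiff_op_sum_right[OF bidiff_C_r A _ f]) (intro smooth_cmult sm)
    also have "\<dots> = (\<lambda>x. \<Sum>a\<in>A. c a * C s f (S a q) x)"
    proof -
      have "C s f (\<lambda>x. c a * S a q x) = (\<lambda>x. c a * C s f (S a q) x)" if "a \<in> A" for a
        using bidiff_op_linear_right[OF bidiff_C_r f sm[OF that] sm[OF that], where a="c a" and b=0] by simp
      then show ?thesis by (intro ext sum.cong) auto
    qed
    finally show ?thesis .
  qed
  show "star_left C f (\<lambda>r x. \<Sum>a\<in>A. c a * S a r x) r x = (\<Sum>a\<in>A. c a * star_left C f (S a) r x)"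
    by (simp add: star_left_def e sum_distrib_left sum.swap[of _ A])
qed

lemma star_left_affine:
  assumes v: "smooth v" and G: "smooth_ser G"
  shows "star_left C (\<lambda>x. v x + c) G = (\<lambda>r x. star_left C v G r x + c * G r x)"
proof (intro ext)
  fix r x
  have sm: "\<And>q. smooth (G q)" using G by (simp add: smooth_ser_def)
  have e: "C s (\<lambda>x. v x + c) (G q) x = C s v (G q) x + (if s = 0 then c * G q x else 0)" for s q
  proof (cases "s = 0")
    case True
    then show ?thesis by (simp add: C_0 v sm smooth_add smooth_const algebra_simps)
  next
    case False
    have "C s (\<lambda>x. 1 * v x + 1 * c) (G q) = (\<lambda>x. 1 * C s v (G q) x + 1 * C s (\<lambda>x. c) (G q) x)"
      by (rule bidiff_op_linear_left[OF bidiff_C_r v smooth_const sm])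
    then show ?thesis using False by (simp add: C_const_left sm)
  qed
  show "star_left C (\<lambda>x. v x + c) G r x = star_left C v G r x + c * G r x"
    by (simp add: star_left_def e sum.distrib sum.delta)
qed

lemma smooth_ser_sym_star:
  assumes "finite J" "\<And>j. j \<in> J \<Longrightarrow> smooth (u j)"
  shows "smooth_ser (sym_star C u J)"
proof -
  have "smooth_ser (star_word C (map u ps))" if "ps \<in> permutations_of_set J" for ps
    using that assms by (intro smooth_ser_star_word) (auto dest: permutations_of_setD)
  then show ?thesis unfolding sym_star_def smooth_ser_def
    by (intro allI smooth_cmult smooth_sum finite_permutations_of_set) (simp add: smooth_ser_def)
qed

lemma sym_star_rec:
  assumes J: "finite J" and u: "\<And>j. j \<in> J \<Longrightarrow> smooth (u j)"
  shows "(\<Sum>j\<in>J. star_left C (u j) (sym_star C u (J - {j})) r x) = real (card J) * sym_star C u J r x"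
proof (cases "J = {}")
  case False
  let ?n = "card J"
  have n: "?n > 0" using J False by (simp add: card_gt_0_iff)
  have word: "smooth_ser (star_word C (map u ps))" if "ps \<in> permutations_of_set (J - {j})" "j \<in> J" for ps j
    using that u by (intro smooth_ser_star_word) (auto dest: permutations_of_setD)
  have "star_left C (u j) (sym_star C u (J - {j})) r x =
      (1 / fact (?n - 1)) * (\<Sum>ps\<in>permutations_of_set (J - {j}). star_word C (map u (j # ps)) r x)"
    if j: "j \<in> J" for j
  proof -
    have "sym_star C u (J - {j}) =
        (\<lambda>r x. \<Sum>ps\<in>permutations_of_set (J - {j}). (1 / fact (?n - 1)) * star_word C (map u ps) r x)"
      using J j by (simp add: sym_star_def sum_distrib_left)
    then have "star_left C (u j) (sym_star C u (J - {j})) r x =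
        (\<Sum>ps\<in>permutations_of_set (J - {j}). (1 / fact (?n - 1)) * star_left C (u j) (star_word C (map u ps)) r x)"
      using j word by (simp only:) (subst star_left_linear, auto intro: u)
    also have "\<dots> = (\<Sum>ps\<in>permutations_of_set (J - {j}). (1 / fact (?n - 1)) * star_word C (map u (j # ps)) r x)"
      using j word by (intro sum.cong refl) (simp add: ser_star_const_left_eq_star_left u)
    finally show ?thesis by (simp add: sum_distrib_left)
  qed
  then have "(\<Sum>j\<in>J. star_left C (u j) (sym_star C u (J - {j})) r x) =
      (1 / fact (?n - 1)) * (\<Sum>ps\<in>permutations_of_set J. star_word C (map u ps) r x)"
    by (simp add: sum_permutations_of_set_remove[OF J False] sum_distrib_left)
  also have "\<dots> = real ?n * sym_star C u J r x"
    using n by (simp add: sym_star_def fact_reduce[of ?n])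
  finally show ?thesis .
qed simp

lemma sym_star_expansion_rec:
  assumes fin: "finite J" and v: "\<And>j. j \<in> J \<Longrightarrow> smooth (v j)"
  shows "(\<Sum>j\<in>J. star_left C (v j) (\<lambda>r x. \<Sum>K\<in>Pow (J - {j}). (\<Prod>i\<in>J - {j} - K. c i) * sym_star C v K r x) r x
      + c j * (\<Sum>K\<in>Pow (J - {j}). (\<Prod>i\<in>J - {j} - K. c i) * sym_star C v K r x)) =
    real (card J) * (\<Sum>K\<in>Pow J. (\<Prod>i\<in>J - K. c i) * sym_star C v K r x)"
proof -
  let ?F = "\<lambda>j K. (\<Prod>i\<in>J - K. c i) * star_left C (v j) (sym_star C v (K - {j})) r x"
  let ?G = "\<lambda>K. (\<Prod>i\<in>J - K. c i) * sym_star C v K r x"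
  have smooth_sym: "smooth_ser (sym_star C v K)" if "K \<subseteq> J" for K
    using that fin v by (intro smooth_ser_sym_star) (auto intro: finite_subset)
  have left: "star_left C (v j) (\<lambda>r x. \<Sum>K\<in>Pow (J - {j}). (\<Prod>i\<in>J - {j} - K. c i) * sym_star C v K r x) r x =
      (\<Sum>K\<in>Pow (J - {j}). ?F j (insert j K))" if "j \<in> J" for j
  proof -
    have "J - {j} - K = J - insert j K" "insert j K - {j} = K" if "K \<in> Pow (J - {j})" for K
      using that by auto
    then show ?thesis
      using that fin by (subst star_left_linear) (auto intro!: v smooth_sym sum.cong)
  qed
  have const: "c j * (\<Sum>K\<in>Pow (J - {j}). (\<Prod>i\<in>J - {j} - K. c i) * sym_star C v K r x) =
      (\<Sum>K\<in>Pow (J - {j}). ?G K)" if "j \<in> J" for j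
  proof -
    have "c j * (\<Prod>i\<in>J - {j} - K. c i) = (\<Prod>i\<in>J - K. c i)" if "K \<in> Pow (J - {j})" for K
    proof -
      have "J - K = insert j (J - {j} - K)" using that \<open>j \<in> J\<close> by auto
      then show ?thesis using fin by simp
    qed
    then show ?thesis by (simp add: sum_distrib_left mult.assoc[symmetric])
  qed
  have F: "(\<Sum>j\<in>K. ?F j K) = real (card K) * ?G K" if "K \<in> Pow J" for K
    using that fin v by (simp add: sum_distrib_left[symmetric] sym_star_rec finite_subset subset_iff)
  have card_split: "real (card K) + real (card (J - K)) = real (card J)" if "K \<in> Pow J" for K
    using that fin by (simp add: card_Diff_subset finite_subset card_mono of_nat_diff)
  have "(\<Sum>j\<in>J. star_left C (v j) (\<lambda>r x. \<Sum>K\<in>Pow (J - {j}). (\<Prod>i\<in>J - {j} - K. c i) * sym_star C v K r x) r x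
      + c j * (\<Sum>K\<in>Pow (J - {j}). (\<Prod>i\<in>J - {j} - K. c i) * sym_star C v K r x)) =
      (\<Sum>j\<in>J. (\<Sum>K\<in>Pow (J - {j}). ?F j (insert j K)) + (\<Sum>K\<in>Pow (J - {j}). ?G K))"
    by (rule sum.cong) (simp_all only: left const)
  also have "\<dots> = (\<Sum>K\<in>Pow J. \<Sum>j\<in>K. ?F j K) + (\<Sum>K\<in>Pow J. \<Sum>j\<in>J - K. ?G K)"
    by (simp only: sum.distrib sum_Pow_remove_insert[OF fin, of ?F] sum_Pow_remove_swap[OF fin, of "\<lambda>j. ?G"])
  also have "\<dots> = (\<Sum>K\<in>Pow J. (real (card K) + real (card (J - K))) * ?G K)"
    unfolding sum.distrib[symmetric] by (rule sum.cong[OF refl]) (simp only: F distrib_right, simp)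
  also have "\<dots> = real (card J) * (\<Sum>K\<in>Pow J. ?G K)"
    by (simp add: card_split sum_distrib_left)
  finally show ?thesis .
qed

lemma sym_star_affine:
  assumes J: "finite J" and v: "\<And>j. j \<in> J \<Longrightarrow> smooth (v j)"
  shows "sym_star C (\<lambda>j x. v j x + c j) J = (\<lambda>r x. \<Sum>K\<in>Pow J. (\<Prod>j\<in>J - K. c j) * sym_star C v K r x)"
  using J v
proof (induct J rule: finite_psubset_induct)
  case (psubset J)
  let ?u = "\<lambda>j x. v j x + c j"
  let ?E = "\<lambda>A r x. \<Sum>K\<in>Pow A. (\<Prod>j\<in>A - K. c j) * sym_star C v K r x"
  have fin: "finite J" and v: "\<And>j. j \<in> J \<Longrightarrow> smooth (v j)" by fact+
  show ?case
  proof (cases "J = {}")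
    case True
    then show ?thesis by (auto simp: sym_star_def fun_eq_iff)
  next
    case False
    have IH: "sym_star C ?u (J - {j}) = ?E (J - {j})" if "j \<in> J" for j
      using that by (intro psubset(2)) (auto intro: v)
    have smooth_E: "smooth_ser (?E (J - {j}))" if "j \<in> J" for j
      using fin v unfolding smooth_ser_def
      by (intro allI smooth_sum smooth_cmult smooth_ser_sym_star[unfolded smooth_ser_def, rule_format])
        (auto intro: finite_subset)
    show ?thesis
    proof (intro ext)
      fix r x
      have "real (card J) * sym_star C ?u J r x = (\<Sum>j\<in>J. star_left C (?u j) (?E (J - {j})) r x)"
        using sym_star_rec[OF fin, of ?u] v IH by (simp add: smooth_add smooth_const)
      also have "\<dots> = (\<Sum>j\<in>J. star_left C (v j) (?E (J - {j})) r x + c j * ?E (J - {j}) r x)"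
        by (simp add: star_left_affine v smooth_E)
      also have "\<dots> = real (card J) * ?E J r x"
        by (rule sym_star_expansion_rec[OF fin v])
      finally show "sym_star C ?u J r x = ?E J r x"
        using False fin by (simp add: card_gt_0_iff)
    qed
  qed
qed

lemma sym_star_cong:
  assumes e: "\<And>j. j \<in> J \<Longrightarrow> u j = u' j"
  shows "sym_star C u J = sym_star C u' J"
proof (intro ext)
  fix r x
  have m: "star_word C (map u ps) r x = star_word C (map u' ps) r x" if "ps \<in> permutations_of_set J" for ps
  proof -
    have "map u ps = map u' ps" using permutations_of_setD[OF that] e by (intro map_cong) auto
    then show ?thesis by (rule arg_cong[where f="\<lambda>l. star_word C l r x"])
  qed
  have "(\<Sum>ps\<in>permutations_of_set J. star_word C (map u ps) r x) = (\<Sum>ps\<in>permutations_of_set J. star_word C (map u' ps) r x)"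
    by (rule sum.cong[OF refl]) (rule m)
  then show "sym_star C u J r x = sym_star C u' J r x" by (simp add: sym_star_def)
qed

lemma sym_star_reindex:
  assumes b: "bij_betw h J' J"
  shows "sym_star C u J = sym_star C (u \<circ> h) J'"
proof -
  have inj: "inj_on h J'" and im: "h ` J' = J" using b by (auto simp: bij_betw_def)
  have P: "permutations_of_set J = map h ` permutations_of_set J'"
    using permutations_of_set_image_inj[OF inj] im by simp
  have inj2: "inj_on (map h) (permutations_of_set J')"
    by (rule inj_on_mapI, rule inj_on_subset[OF inj]) (auto dest: permutations_of_setD)
  have c: "card J = card J'" using bij_betw_same_card[OF b] by simp
  show ?thesis unfolding sym_star_def P c
    by (simp add: sum.reindex[OF inj2] map_map)
qed

lemma star_word_0: "(\<And>u. u \<in> set us \<Longrightarrow> smooth u) \<Longrightarrow> star_word C us 0 = (\<lambda>x. \<Prod>u\<leftarrow>us. u x)"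
proof (induct us)
  case Nil
  then show ?case by (simp add: const_ser_def)
next
  case (Cons u us)
  have Ws: "smooth_ser (star_word C us)" by (rule smooth_ser_star_word) (use Cons in auto)
  have "star_word C (u # us) 0 = C 0 u (star_word C us 0)" by (simp add: ser_star_const_left_eq_star_left Ws Cons star_left_def)
  also have "\<dots> = (\<lambda>x. u x * star_word C us 0 x)" using C_0[of u "star_word C us 0"] Ws Cons.prems by (simp add: smooth_ser_def)
  finally show ?case using Cons by simp
qed

lemma sym_star_0:
  assumes J: "finite J" and u: "\<And>j. j \<in> J \<Longrightarrow> smooth (u j)"
  shows "sym_star C u J 0 = (\<lambda>x. \<Prod>j\<in>J. u j x)"
proof
  fix x
  have "star_word C (map u ps) 0 x = (\<Prod>j\<in>J. u j x)" if "ps \<in> permutations_of_set J" for ps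
  proof -
    have d: "distinct ps" and st: "set ps = J" using permutations_of_setD[OF that] by auto
    have "star_word C (map u ps) 0 x = (\<Prod>j\<leftarrow>ps. u j x)"
      using u st by (subst star_word_0) (auto simp: o_def)
    also have "\<dots> = (\<Prod>j\<in>J. u j x)" using d st by (metis prod.distinct_set_conv_list)
    finally show ?thesis .
  qed
  then show "sym_star C u J 0 x = (\<Prod>j\<in>J. u j x)"
    unfolding sym_star_def using J by simp
qed

lemma star_list_eq_star_word: "star_list C js = star_word C (map coord js)"
  by (induct js) auto

lemma sun_cochain_eq_sym_star: "sun_cochain C q is = sym_star C (\<lambda>j. coord (is ! j)) {0..<length is} q"
proof (rule ext)
  fix x
  have "(\<Sum>\<sigma>\<in>{\<sigma>. \<sigma> permutes {0..<length is}}. star_list C (map (\<lambda>j. is ! \<sigma> j) [0..<length is]) q x) =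
      (\<Sum>ps\<in>permutations_of_set {0..<length is}. star_word C (map (\<lambda>j. coord (is ! j)) ps) q x)"
    using sum_permutes_eq_sum_permutations_of_set[where k="length is" and F="\<lambda>ps. star_word C (map (\<lambda>j. coord (is ! j)) ps) q x"]
    by (simp add: star_list_eq_star_word map_map o_def)
  then show "sun_cochain C q is x = sym_star C (\<lambda>j. coord (is ! j)) {0..<length is} q x"
    by (simp add: sun_cochain_def sym_star_def)
qed

lemma sun_cochain_0: "sun_cochain C 0 is = monomial is"
proof -
  have "sun_cochain C 0 is = (\<lambda>x. \<Prod>j\<in>{0..<length is}. coord (is ! j) x)"
    by (simp add: sun_cochain_eq_sym_star sym_star_0 smooth_coord)
  then show ?thesis by (simp add: monomial_def coord_def lessThan_atLeast0)
qed

lemma flat_to_order_C: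
  obtains K where "\<And>s x0 f G m. s \<le> r \<Longrightarrow> smooth f \<Longrightarrow> smooth G \<Longrightarrow>
    flat_to_order x0 (m + K) G \<Longrightarrow> flat_to_order x0 m (C s f G)"
proof -
  have "\<exists>k. \<forall>x0 f G m. smooth f \<longrightarrow> smooth G \<longrightarrow> flat_to_order x0 (m + k) G \<longrightarrow>
      flat_to_order x0 m (C s f G)" for s
    by (rule flat_to_order_bidiff_op[OF bidiff_C_r]) blast
  then have "\<forall>s. \<exists>k. \<forall>x0 f G m. smooth f \<longrightarrow> smooth G \<longrightarrow> flat_to_order x0 (m + k) G \<longrightarrow>
      flat_to_order x0 m (C s f G)"
    by blast
  from choice[OF this] obtain k where k: "\<forall>s x0 f G m. smooth f \<longrightarrow> smooth G \<longrightarrow>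
      flat_to_order x0 (m + k s) G \<longrightarrow> flat_to_order x0 m (C s f G)"
    by blast
  show thesis
  proof (rule that)
    fix s and x0 :: "real^'n" and f G :: "'n fn" and m
    assume s: "s \<le> r" and f: "smooth f" and G: "smooth G" and flat: "flat_to_order x0 (m + (\<Sum>s\<le>r. k s)) G"
    have "k s \<le> (\<Sum>s\<le>r. k s)" using s by (intro member_le_sum) auto
    then have "flat_to_order x0 (m + k s) G" by (intro flat_to_order_mono[OF _ flat]) simp
    then show "flat_to_order x0 m (C s f G)" using k f G by blast
  qed
qed

text \<open>Each factor vanishing at \<open>x0\<close> adds one order of flatness, and each of the at most \<open>q\<close>
  operators \<open>C s\<close> with \<open>s \<ge> 1\<close> costs at most \<open>K\<close> orders.\<close>

lemma flat_to_order_star_word: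
  assumes K: "\<And>s x0 f G m. s \<le> r \<Longrightarrow> smooth f \<Longrightarrow> smooth G \<Longrightarrow>
      flat_to_order x0 (m + K) G \<Longrightarrow> flat_to_order x0 m (C s f G)"
    and "q \<le> r" "m + (K + 1) * q \<le> length us" "\<And>u. u \<in> set us \<Longrightarrow> smooth u \<and> u x0 = 0"
  shows "flat_to_order x0 m (star_word C us q)"
  using assms(2-)
proof (induct us arbitrary: q m)
  case Nil
  then show ?case by (simp add: flat_to_order_def)
next
  case (Cons u us)
  have u: "smooth u" "u x0 = 0" using Cons.prems(3) by auto
  have word: "smooth_ser (star_word C us)" using Cons.prems(3) by (intro smooth_ser_star_word) auto
  then have word_q: "smooth (star_word C us q')" for q' by (simp add: smooth_ser_def)
  have "flat_to_order x0 m (C s u (star_word C us (q - s)))" if s: "s \<le> q" for s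
  proof (cases "s = 0")
    case True
    show ?thesis
    proof (cases m)
      case 0
      then show ?thesis by (simp add: flat_to_order_def)
    next
      case (Suc m')
      have "flat_to_order x0 m' (star_word C us q)"
        using Cons.prems Suc by (intro Cons.hyps) auto
      moreover have "flat_to_order x0 1 u" unfolding flat_to_order_1_iff by (fact u(2))
      ultimately have "flat_to_order x0 (1 + m') (\<lambda>x. u x * star_word C us q x)"
        using flat_to_order_mult[OF u(1) _ word_q] by blast
      then show ?thesis using True Suc by (simp add: C_0 u word_q)
    qed
  next
    case False
    have "(K + 1) * (q - s) + (K + 1) = (K + 1) * (q - s + 1)" by simp
    also have "\<dots> \<le> (K + 1) * q" using False s by (intro mult_le_mono2) simp
    finally have "flat_to_order x0 (m + K) (star_word C us (q - s))"
      using Cons.prems by (intro Cons.hyps) auto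
    then show ?thesis using K Cons.prems(1) s u word_q by auto
  qed
  then have "flat_to_order x0 m (\<lambda>x. \<Sum>s\<le>q. C s u (star_word C us (q - s)) x)"
    by (intro flat_to_order_sum finite_atMost) (auto intro: smooth_bidiff_op bidiff_C_r u word_q)
  then show ?case
    by (simp add: ser_star_const_left_eq_star_left u word star_left_def)
qed

lemma star_word_vanish:
  "\<exists>N. \<forall>us x0. (\<forall>u\<in>set us. smooth u \<and> u x0 = 0) \<longrightarrow> length us > N \<longrightarrow> star_word C us r x0 = 0"
proof (rule flat_to_order_C[where r=r])
  fix K
  assume K: "\<And>s x0 f G m. s \<le> r \<Longrightarrow> smooth f \<Longrightarrow> smooth G \<Longrightarrow>
      flat_to_order x0 (m + K) G \<Longrightarrow> flat_to_order x0 m (C s f G)"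
  have "star_word C us r x0 = 0" if "\<forall>u\<in>set us. smooth u \<and> u x0 = 0" "length us > (K + 1) * r" for us x0
  proof -
    have "flat_to_order x0 1 (star_word C us r)"
      using that by (intro flat_to_order_star_word[OF K]) auto
    then show ?thesis by (simp only: flat_to_order_1_iff)
  qed
  then show ?thesis by blast
qed

text \<open>\<open>sun_order r\<close> bounds the order of the differential operator representing the sun-product
  cochain \<open>\<rho>_r\<close>.\<close>

definition sun_order :: "nat \<Rightarrow> nat" where
  "sun_order r = (SOME N. \<forall>us x0. (\<forall>u\<in>set us. smooth u \<and> u x0 = 0) \<longrightarrow> length us > N \<longrightarrow>
      star_word C us r x0 = 0)"

lemma star_word_vanish_sun_order:
  "(\<forall>u\<in>set us. smooth u \<and> u x0 = 0) \<Longrightarrow> length us > sun_order r \<Longrightarrow> star_word C us r x0 = 0"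
  using someI_ex[OF star_word_vanish[of r]] unfolding sun_order_def by blast

text \<open>The coefficient of \<open>\<partial>\<^sup>\<beta>\<close> at \<open>x\<close> is \<open>\<rho>_r((y - x)\<^sup>\<beta>) / |\<beta>|!\<close> evaluated at \<open>y = x\<close>
  (a Taylor expansion of the monomial around \<open>x\<close>), expanded by \<open>sym_star_affine\<close> so that
  its smoothness in \<open>x\<close> is visible.\<close>

definition sun_coeff :: "nat \<Rightarrow> 'n list \<Rightarrow> 'n fn" where
  "sun_coeff r \<beta> = (\<lambda>x. (1 / fact (length \<beta>)) * (\<Sum>K\<in>Pow {0..<length \<beta>}.
      (\<Prod>j\<in>{0..<length \<beta>} - K. - (x $ (\<beta> ! j))) * sym_star C (\<lambda>j. coord (\<beta> ! j)) K r x))"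

definition sun_op :: "nat \<Rightarrow> 'n fn \<Rightarrow> 'n fn" where
  "sun_op r f = (if r = 0 then f else (\<lambda>x. \<Sum>\<beta>\<in>idx_lists (sun_order r). sun_coeff r \<beta> x * pderivs \<beta> f x))"

lemma smooth_sun_coeff: "smooth (sun_coeff r \<beta>)"
proof -
  have "smooth (sym_star C (\<lambda>j. coord (\<beta> ! j)) K r)" if "K \<subseteq> {0..<length \<beta>}" for K
    using smooth_ser_sym_star[of K "\<lambda>j. coord (\<beta> ! j)"] that
    by (simp add: smooth_ser_def smooth_coord finite_subset)
  then show ?thesis
    unfolding sun_coeff_def
    by (intro smooth_cmult smooth_sum smooth_mult smooth_prod smooth_neg_coord) auto
qed

lemma diff_ops_sun_op: "diff_ops sun_op"
  unfolding diff_ops_def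
proof
  fix r
  show "diff_op (sun_op r)"
  proof (cases "r = 0")
    case True
    then show ?thesis using diff_op_id by (simp add: sun_op_def[abs_def])
  next
    case False
    show ?thesis unfolding diff_op_def
      by (intro exI[of _ "sun_order r"] exI[of _ "sun_coeff r"]) (simp add: sun_op_def False smooth_sun_coeff)
  qed
qed

lemma sun_op_0: "sun_op 0 = (\<lambda>f. f)"
  by (simp add: sun_op_def[abs_def])

lemma sym_star_centered_vanish:
  assumes "finite J" "card J > sun_order r"
  shows "sym_star C (\<lambda>j y. y $ l j - x0 $ l j) J r x0 = 0"
proof -
  have "star_word C (map (\<lambda>j y. y $ l j - x0 $ l j) ps) r x0 = 0"
    if "ps \<in> permutations_of_set J" for ps
    using length_finite_permutations_of_set[OF that] assms
    by (intro star_word_vanish_sun_order) (auto intro!: smooth_coord_shift)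
  then show ?thesis by (simp add: sym_star_def)
qed

lemma sun_coeff_map:
  assumes "distinct ps"
  shows "sun_coeff r (map l ps) x0 = (1 / fact (length ps)) * sym_star C (\<lambda>j y. y $ l j - x0 $ l j) (set ps) r x0"
proof -
  let ?L = "map l ps"
  have "sym_star C (\<lambda>j y. coord (?L ! j) y + - (x0 $ (?L ! j))) {0..<length ?L} =
      (\<lambda>r x. \<Sum>K\<in>Pow {0..<length ?L}. (\<Prod>j\<in>{0..<length ?L} - K. - (x0 $ (?L ! j))) *
        sym_star C (\<lambda>j. coord (?L ! j)) K r x)"
    by (rule sym_star_affine) (auto simp: smooth_coord)
  then have "sun_coeff r ?L x0 =
      (1 / fact (length ps)) * sym_star C (\<lambda>j y. coord (?L ! j) y + - (x0 $ (?L ! j))) {0..<length ps} r x0"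
    by (simp only: sun_coeff_def length_map)
  also have "sym_star C (\<lambda>j y. coord (?L ! j) y + - (x0 $ (?L ! j))) {0..<length ps} =
      sym_star C ((\<lambda>j y. y $ l j - x0 $ l j) \<circ> (!) ps) {0..<length ps}"
    by (rule sym_star_cong) (auto simp: coord_def)
  also have "\<dots> = sym_star C (\<lambda>j y. y $ l j - x0 $ l j) (set ps)"
    using bij_betw_nth[OF assms] by (intro sym_star_reindex[symmetric]) (auto simp: lessThan_atLeast0)
  finally show ?thesis .
qed

lemma sun_op_monomial_on_truncated:
  assumes "r \<ge> 1" and J: "finite J"
  shows "sun_op r (monomial_on l J) x0 = (\<Sum>K\<in>{K\<in>Pow J. card K \<le> sun_order r}.
    sym_star C (\<lambda>j y. y $ l j - x0 $ l j) K r x0 * monomial_on l (J - K) x0)"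
proof -
  let ?w = "\<lambda>j y. y $ l j - x0 $ l j"
  let ?F = "\<lambda>ps. sun_coeff r (map l ps) x0 * monomial_on l (J - set ps) x0"
  have "sun_op r (monomial_on l J) x0 = (\<Sum>\<beta>\<in>idx_lists (sun_order r). \<Sum>ps\<in>diff_choices l J \<beta>. ?F ps)"
    using assms by (auto simp: sun_op_def pderivs_monomial_on sum_distrib_left diff_choices_def intro!: sum.cong)
  also have "\<dots> = (\<Sum>K\<in>{K\<in>Pow J. card K \<le> sun_order r}. \<Sum>ps\<in>permutations_of_set K. ?F ps)"
    by (rule sum_diff_choices_regroup[OF J])
  also have "\<dots> = (\<Sum>K\<in>{K\<in>Pow J. card K \<le> sun_order r}. sym_star C ?w K r x0 * monomial_on l (J - K) x0)"
  proof (intro sum.cong refl)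
    fix K assume "K \<in> {K\<in>Pow J. card K \<le> sun_order r}"
    then have fK: "finite K" using J by (auto intro: finite_subset)
    have "?F ps = (1 / fact (card K)) * (sym_star C ?w K r x0 * monomial_on l (J - K) x0)"
      if "ps \<in> permutations_of_set K" for ps
      using permutations_of_setD[OF that] length_finite_permutations_of_set[OF that]
      by (simp add: sun_coeff_map)
    then show "(\<Sum>ps\<in>permutations_of_set K. ?F ps) = sym_star C ?w K r x0 * monomial_on l (J - K) x0"
      by (simp add: fK)
  qed
  finally show ?thesis .
qed

text \<open>Write \<open>y_{l j} = (y_{l j} - x0_{l j}) + x0_{l j}\<close> and expand: only the terms with at most
  \<open>sun_order r\<close> centred factors survive at \<open>x0\<close>, and these are exactly the terms of
  the Taylor expansion of the monomial that \<open>sun_op\<close> sees.\<close>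

lemma sun_op_monomial_on:
  assumes r: "r \<ge> 1" and J: "finite J"
  shows "sun_op r (monomial_on l J) x0 = sym_star C (\<lambda>j. coord (l j)) J r x0"
proof -
  let ?w = "\<lambda>j y. y $ l j - x0 $ l j"
  have "sym_star C ?w K r x0 = 0" if "K \<subseteq> J" "\<not> card K \<le> sun_order r" for K
    using that J by (intro sym_star_centered_vanish) (auto intro: finite_subset)
  then have "sun_op r (monomial_on l J) x0 = (\<Sum>K\<in>Pow J. sym_star C ?w K r x0 * monomial_on l (J - K) x0)"
    unfolding sun_op_monomial_on_truncated[OF assms] using J by (intro sum.mono_neutral_left) auto
  also have "\<dots> = sym_star C (\<lambda>j y. ?w j y + x0 $ l j) J r x0"
    by (subst sym_star_affine[OF J]) (simp_all add: smooth_coord_shift monomial_on_def mult.commute)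
  also have "sym_star C (\<lambda>j y. ?w j y + x0 $ l j) J = sym_star C (\<lambda>j. coord (l j)) J"
    by (rule sym_star_cong) (auto simp: coord_def)
  finally show ?thesis .
qed

lemma sun_cochain_eq_sun_op: "sun_cochain C q is = sun_op q (monomial is)"
proof (cases "q = 0")
  case True
  then show ?thesis by (simp add: sun_cochain_0 sun_op_0)
next
  case False
  then show ?thesis
    using sun_op_monomial_on[of q "{0..<length is}" "\<lambda>j. is ! j"]
    by (auto simp: sun_cochain_eq_sym_star monomial_eq_monomial_on)
qed

end

section \<open>Transport along an operator series\<close>

locale transport = star_prod P C for P :: "'n::finite fn \<Rightarrow> 'n fn \<Rightarrow> 'n fn" and C +
  fixes R :: "nat \<Rightarrow> 'n fn \<Rightarrow> 'n fn"
  assumes diff_ops_R: "diff_ops R" and R_0: "R 0 = (\<lambda>f. f)"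
    and sun_cochain_eq_R: "\<And>q is. sun_cochain C q is = R q (monomial is)"
begin

abbreviation "T \<equiv> ops_rinv R"

lemma diff_ops_T: "diff_ops T" by (rule diff_ops_rinv[OF diff_ops_R])

definition star_transp :: "'n ser \<Rightarrow> 'n ser \<Rightarrow> 'n ser" where
  "star_transp F G = ops_apply T (ser_star C (ops_apply R F) (ops_apply R G))"

definition C' :: "nat \<Rightarrow> 'n fn \<Rightarrow> 'n fn \<Rightarrow> 'n fn" where
  "C' r f g = star_transp (const_ser f) (const_ser g) r"

lemma ops_apply_R_const: "ops_apply R (const_ser f) = (\<lambda>q. R q f)"
  by (rule ext) (simp add: ops_apply_const diff_ops_R)

lemma C'_expand: "C' r = (\<lambda>f g x. \<Sum>s\<le>r. T s (\<lambda>x. \<Sum>a\<le>r - s. \<Sum>b\<le>r - s - a.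
      C a (R b f) (R (r - s - a - b) g) x) x)"
  by (intro ext) (simp only: C'_def star_transp_def ops_apply_R_const, simp add: ops_apply_def ser_star_def)

lemma bidiff_ops_C': "bidiff_ops C'"
  unfolding bidiff_ops_def
proof
  fix r
  have "bidiff_op (\<lambda>f g x. \<Sum>s\<le>r. T s (\<lambda>x. \<Sum>a\<le>r - s. \<Sum>b\<le>r - s - a.
      C a (R b f) (R (r - s - a - b) g) x) x)"
  proof (rule bidiff_op_sum[OF finite_atMost])
    fix s
    have i: "bidiff_op (\<lambda>f g x. \<Sum>a\<le>r - s. \<Sum>b\<le>r - s - a. C a (R b f) (R (r - s - a - b) g) x)"
    proof (rule bidiff_op_sum[OF finite_atMost], rule bidiff_op_sum[OF finite_atMost])
      fix a b
      show "bidiff_op (\<lambda>f g. C a (R b f) (R (r - s - a - b) g))"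
        by (rule bidiff_diff_comp) (use bidiff_C diff_ops_R in \<open>auto simp: bidiff_ops_def diff_ops_def\<close>)
    qed
    have "bidiff_op (\<lambda>f g. T s (\<lambda>x. \<Sum>a\<le>r - s. \<Sum>b\<le>r - s - a. C a (R b f) (R (r - s - a - b) g) x))"
      by (rule diff_bidiff_comp[OF _ i]) (use diff_ops_T in \<open>simp add: diff_ops_def\<close>)
    then show "bidiff_op (\<lambda>f g x. T s (\<lambda>x. \<Sum>a\<le>r - s. \<Sum>b\<le>r - s - a. C a (R b f) (R (r - s - a - b) g) x) x)"
      by simp
  qed
  then show "bidiff_op (C' r)" by (simp add: C'_expand)
qed

lemma smooth_star_transp: "smooth_ser F \<Longrightarrow> smooth_ser G \<Longrightarrow> smooth_ser (star_transp F G)"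
  unfolding star_transp_def by (intro smooth_ops_apply diff_ops_T smooth_ser_star bidiff_C diff_ops_R)

lemma star_transp_add_left: "smooth_ser F \<Longrightarrow> smooth_ser F' \<Longrightarrow> smooth_ser G \<Longrightarrow> star_transp (ser_add F F') G = ser_add (star_transp F G) (star_transp F' G)"
  unfolding star_transp_def by (simp add: ops_apply_add ser_star_add_left diff_ops_R diff_ops_T bidiff_C smooth_ops_apply smooth_ser_star)

lemma star_transp_add_right: "smooth_ser F \<Longrightarrow> smooth_ser G \<Longrightarrow> smooth_ser G' \<Longrightarrow> star_transp F (ser_add G G') = ser_add (star_transp F G) (star_transp F G')"
  unfolding star_transp_def by (simp add: ops_apply_add ser_star_add_right diff_ops_R diff_ops_T bidiff_C smooth_ops_apply smooth_ser_star)

lemma star_transp_shift_left: "smooth_ser G \<Longrightarrow> star_transp (ser_shift F) G = ser_shift (star_transp F G)"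
  unfolding star_transp_def by (simp add: ops_apply_shift ser_star_shift_left diff_ops_R diff_ops_T bidiff_C smooth_ops_apply)

lemma star_transp_shift_right: "smooth_ser F \<Longrightarrow> star_transp F (ser_shift G) = ser_shift (star_transp F G)"
  unfolding star_transp_def by (simp add: ops_apply_shift ser_star_shift_right diff_ops_R diff_ops_T bidiff_C smooth_ops_apply)

lemma ser_star_C'_const_left:
  assumes f: "smooth f" and G: "smooth_ser G"
  shows "ser_star C' (const_ser f) G = star_transp (const_ser f) G"
proof (rule ser_additive_shift_eqI[of "ser_star C' (const_ser f)" "star_transp (const_ser f)"])
  fix G G' :: "'n ser" assume "smooth_ser G" "smooth_ser G'"
  then show "ser_star C' (const_ser f) (ser_add G G') = ser_add (ser_star C' (const_ser f) G) (ser_star C' (const_ser f) G')"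
    "star_transp (const_ser f) (ser_add G G') = ser_add (star_transp (const_ser f) G) (star_transp (const_ser f) G')"
    by (simp_all add: ser_star_add_right star_transp_add_right bidiff_ops_C' smooth_ser_const f)
next
  fix G :: "'n ser"
  show "ser_star C' (const_ser f) (ser_shift G) = ser_shift (ser_star C' (const_ser f) G)"
    "star_transp (const_ser f) (ser_shift G) = ser_shift (star_transp (const_ser f) G)"
    by (simp_all add: ser_star_shift_right star_transp_shift_right bidiff_ops_C' smooth_ser_const f)
next
  fix g :: "'n fn" assume g: "smooth g"
  show "ser_star C' (const_ser f) (const_ser g) = star_transp (const_ser f) (const_ser g)"
    by (rule ext) (simp add: ser_star_const bidiff_ops_C' f g C'_def)
qed (rule G)

lemma ser_star_C':
  assumes F: "smooth_ser F" and G: "smooth_ser G"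
  shows "ser_star C' F G = star_transp F G"
proof (rule ser_additive_shift_eqI[of "\<lambda>F. ser_star C' F G" "\<lambda>F. star_transp F G"])
  fix F F' :: "'n ser" assume "smooth_ser F" "smooth_ser F'"
  then show "ser_star C' (ser_add F F') G = ser_add (ser_star C' F G) (ser_star C' F' G)"
    "star_transp (ser_add F F') G = ser_add (star_transp F G) (star_transp F' G)"
    by (simp_all add: ser_star_add_left star_transp_add_left bidiff_ops_C' G)
next
  fix F :: "'n ser"
  show "ser_star C' (ser_shift F) G = ser_shift (ser_star C' F G)" "star_transp (ser_shift F) G = ser_shift (star_transp F G)"
    by (simp_all add: ser_star_shift_left star_transp_shift_left bidiff_ops_C' G)
qed (auto simp: ser_star_C'_const_left G F)

lemma R_one: "q \<ge> 1 \<Longrightarrow> R q (\<lambda>x. 1) = (\<lambda>x. 0)"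
  using sun_cochain_eq_R[of q "[]"] by (simp add: sun_cochain_nil monomial_def const_ser_def)

lemma R_const: assumes "q \<ge> 1" shows "R q (\<lambda>x. c) = (\<lambda>x. 0)"
proof -
  have "R q (\<lambda>x. c * 1) = (\<lambda>x. c * R q (\<lambda>x. 1) x)"
    using diff_op_cmult_arg[of "R q" "\<lambda>x. 1" c] diff_ops_R smooth_const[of 1] by (simp add: diff_ops_def)
  then show ?thesis using R_one[OF assms] by simp
qed

lemma R_coord: assumes "q \<ge> 1" shows "R q (coord i) = (\<lambda>x. 0)"
proof -
  have m: "monomial [i] = coord i" by (simp add: monomial_def coord_def)
  have "star_list C [i] q = C q (coord i) (\<lambda>x. 1)"
    by (simp add: ser_star_const bidiff_C smooth_coord smooth_const)
  then show ?thesis using sun_cochain_eq_R[of q "[i]"] C_const_right[OF assms smooth_coord] by (simp add: sun_cochain_single m)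
qed

lemma ops_apply_R_fixed: assumes "\<And>q. q \<ge> 1 \<Longrightarrow> R q f = (\<lambda>x. 0)" shows "ops_apply R (const_ser f) = const_ser f"
  using assms by (auto simp: ops_apply_R_const const_ser_def R_0 fun_eq_iff)

lemma ops_apply_T_fixed:
  assumes "\<And>q. q \<ge> 1 \<Longrightarrow> R q f = (\<lambda>x. 0)" "smooth f"
  shows "ops_apply T (const_ser f) = const_ser f"
  using ops_apply_inverse(2)[OF diff_ops_R R_0 smooth_ser_const[OF assms(2)]] ops_apply_R_fixed[OF assms(1)] by simp

lemma T_const: assumes "q \<ge> 1" shows "T q (\<lambda>x. c) = (\<lambda>x. 0)"
proof -
  have h: "ops_apply T (const_ser (\<lambda>x. c)) = const_ser (\<lambda>x. c)"
    by (rule ops_apply_T_fixed) (auto simp: R_const smooth_const)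
  then have "T q (\<lambda>x. c) = const_ser (\<lambda>x. c) q" using ops_apply_const[OF diff_ops_T, of "\<lambda>x. c" q] by simp
  then show ?thesis using assms by (simp add: const_ser_def)
qed

lemma ops_apply_T_R: "smooth_ser F \<Longrightarrow> ops_apply T (ops_apply R F) = F"
  by (rule ops_apply_inverse(2)[OF diff_ops_R R_0])

lemma ops_apply_R_T: "smooth_ser F \<Longrightarrow> ops_apply R (ops_apply T F) = F"
  by (rule ops_apply_inverse(1)[OF diff_ops_R R_0])

lemma star_transp_assoc:
  assumes "smooth_ser F" "smooth_ser G" "smooth_ser H"
  shows "star_transp (star_transp F G) H = star_transp F (star_transp G H)"
  unfolding star_transp_def using assms
  by (simp add: ops_apply_R_T smooth_ser_star smooth_ops_apply bidiff_C diff_ops_R ser_star_assoc[OF bidiff_C C_assoc])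

theorem star_equiv_C': "star_equiv C C'"
  unfolding star_equiv_def
proof (intro exI[of _ T] conjI allI impI)
  fix f :: "'n fn" show "T 0 f = f" by simp
next
  fix r :: nat and c :: real assume "1 \<le> r"
  show "diff_op (T r)" using diff_ops_T by (simp add: diff_ops_def)
  show "T r (\<lambda>x. c) = (\<lambda>x. 0)" by (rule T_const) fact
next
  fix f g :: "'n fn" and r assume f: "smooth f" and g: "smooth g"
  have "(\<lambda>x. \<Sum>a\<le>r. \<Sum>b\<le>r - a. C' a (T b f) (T (r - a - b) g) x) =
        ser_star C' (ops_apply T (const_ser f)) (ops_apply T (const_ser g)) r"
    by (simp add: ser_star_def ops_apply_const diff_ops_T)
  also have "\<dots> = star_transp (ops_apply T (const_ser f)) (ops_apply T (const_ser g)) r"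
    by (simp add: ser_star_C' smooth_ops_apply diff_ops_T smooth_ser_const f g)
  also have "\<dots> = ops_apply T (ser_star C (const_ser f) (const_ser g)) r"
    by (simp add: star_transp_def ops_apply_R_T smooth_ser_const f g)
  also have "\<dots> = (\<lambda>x. \<Sum>s\<le>r. T s (C (r - s) f g) x)"
    by (simp add: ops_apply_def ser_star_const bidiff_C f g)
  finally show "(\<lambda>x. \<Sum>s\<le>r. T s (C (r - s) f g) x) = (\<lambda>x. \<Sum>a\<le>r. \<Sum>b\<le>r - a. C' a (T b f) (T (r - a - b) g) x)"
    by simp
qed

lemma C'_0: "smooth f \<Longrightarrow> smooth g \<Longrightarrow> C' 0 f g = (\<lambda>x. f x * g x)"
  by (simp add: C'_def star_transp_def ops_apply_def ser_star_def ops_apply_R_const R_0 C_0 const_ser_def)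

lemma C'_const_left:
  assumes "r \<ge> 1" "smooth f"
  shows "C' r (\<lambda>x. c) f = (\<lambda>x. 0)"
proof -
  have "C' r (\<lambda>x. c) f = ops_apply T (ser_scale c (ops_apply R (const_ser f))) r"
    using assms by (simp add: C'_def star_transp_def ops_apply_R_fixed R_const ser_star_scalar_left
        smooth_ops_apply diff_ops_R smooth_ser_const)
  also have "\<dots> = ser_scale c (const_ser f) r"
    using assms by (simp add: ops_apply_scale diff_ops_T smooth_ops_apply diff_ops_R smooth_ser_const ops_apply_T_R)
  finally show ?thesis using assms by (simp add: ser_scale_def const_ser_def)
qed

lemma C'_const_right:
  assumes "r \<ge> 1" "smooth f"
  shows "C' r f (\<lambda>x. c) = (\<lambda>x. 0)"
proof -
  have "C' r f (\<lambda>x. c) = ops_apply T (ser_scale c (ops_apply R (const_ser f))) r"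
    using assms by (simp add: C'_def star_transp_def ops_apply_R_fixed R_const ser_star_scalar_right
        smooth_ops_apply diff_ops_R smooth_ser_const)
  also have "\<dots> = ser_scale c (const_ser f) r"
    using assms by (simp add: ops_apply_scale diff_ops_T smooth_ops_apply diff_ops_R smooth_ser_const ops_apply_T_R)
  finally show ?thesis using assms by (simp add: ser_scale_def const_ser_def)
qed

lemma C'_assoc:
  assumes f: "smooth f" and g: "smooth g" and h: "smooth h"
  shows "(\<lambda>x. \<Sum>s\<le>r. C' s (C' (r - s) f g) h x) = (\<lambda>x. \<Sum>s\<le>r. C' s f (C' (r - s) g h) x)"
proof -
  have fgh: "smooth_ser (const_ser f)" "smooth_ser (const_ser g)" "smooth_ser (const_ser h)"
    using f g h by (simp_all add: smooth_ser_const)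
  have "(\<lambda>x. \<Sum>s\<le>r. C' s (C' (r - s) f g) h x) = ser_star C' (ser_star C' (const_ser f) (const_ser g)) (const_ser h) r"
    by (simp add: ser_star_const_right[OF bidiff_ops_C' smooth_ser_star[OF bidiff_ops_C' fgh(1,2)] h]
        ser_star_const bidiff_ops_C' f g)
  also have "\<dots> = star_transp (star_transp (const_ser f) (const_ser g)) (const_ser h) r"
    by (simp add: ser_star_C' smooth_ser_star bidiff_ops_C' smooth_star_transp fgh)
  also have "\<dots> = star_transp (const_ser f) (star_transp (const_ser g) (const_ser h)) r"
    by (simp add: star_transp_assoc fgh)
  also have "\<dots> = ser_star C' (const_ser f) (ser_star C' (const_ser g) (const_ser h)) r"
    by (simp add: ser_star_C' smooth_ser_star bidiff_ops_C' smooth_star_transp fgh)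
  also have "\<dots> = (\<lambda>x. \<Sum>s\<le>r. C' s f (C' (r - s) g h) x)"
    by (simp add: ser_star_const_left[OF bidiff_ops_C' f smooth_ser_star[OF bidiff_ops_C' fgh(2,3)]]
        ser_star_const bidiff_ops_C' g h)
  finally show ?thesis .
qed

lemma C'_1:
  assumes f: "smooth f" and g: "smooth g"
  shows "C' 1 f g = (\<lambda>x. f x * R 1 g x + R 1 f x * g x + C 1 f g x + T 1 (\<lambda>x. f x * g x) x)"
proof -
  have "C' 1 f g = (\<lambda>x. C 0 f (R 1 g) x + C 0 (R 1 f) g x + C 1 f g x + T 1 (\<lambda>x. C 0 f g x) x)"
    by (simp add: C'_expand R_0 atMost_Suc ac_simps)
  then show ?thesis
    using diff_ops_R f g by (simp add: C_0 smooth_diff_op diff_ops_def)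
qed

lemma C'_antisym:
  assumes f: "smooth f" and g: "smooth g"
  shows "(\<lambda>x. C' 1 f g x - C' 1 g f x) = (\<lambda>x. 2 * P f g x)"
proof -
  have "(\<lambda>x. g x * f x) = (\<lambda>x. f x * g x)" by (simp add: mult.commute)
  then have "(\<lambda>x. C' 1 f g x - C' 1 g f x) = (\<lambda>x. C 1 f g x - C 1 g f x)"
    unfolding C'_1[OF f g] C'_1[OF g f] by (simp add: algebra_simps)
  then show ?thesis using C_antisym[OF f g] by simp
qed

theorem star_product_C': "star_product P C'"
  using bidiff_ops_C' C'_0 C'_const_left C'_const_right C'_assoc C'_antisym
  unfolding star_product_def bidiff_ops_def by blast

lemma star_list_C': "star_list C' is = ops_apply T (star_list C is)"
proof (induct "is")
  case Nil
  have "ops_apply T (const_ser (\<lambda>x. 1)) = const_ser (\<lambda>x. 1)"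
    by (rule ops_apply_T_fixed) (auto simp: R_const smooth_const)
  then show ?case by simp
next
  case (Cons i "is")
  have ci: "ops_apply R (const_ser (coord i)) = const_ser (coord i)" by (rule ops_apply_R_fixed) (simp add: R_coord)
  have "star_list C' (i # is) = ser_star C' (const_ser (coord i)) (ops_apply T (star_list C is))"
    by (simp add: Cons)
  also have "\<dots> = star_transp (const_ser (coord i)) (ops_apply T (star_list C is))"
    by (simp add: ser_star_C' smooth_ser_const smooth_coord smooth_ops_apply diff_ops_T smooth_ser_star_list)
  also have "\<dots> = ops_apply T (star_list C (i # is))"
    by (simp add: star_transp_def ci ops_apply_R_T smooth_ser_star_list)
  finally show ?case .
qed

lemma sun_cochain_C':
  assumes "r \<ge> 1"
  shows "sun_cochain C' r is = (\<lambda>x. 0)"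
proof -
  have "sun_cochain C' r is = ops_apply T (\<lambda>q. sun_cochain C q is) r"
    by (rule sun_cochain_ops_apply[OF diff_ops_T star_list_C' smooth_ser_star_list])
  also have "\<dots> = ops_apply T (ops_apply R (const_ser (monomial is))) r"
    by (simp add: sun_cochain_eq_R ops_apply_R_const)
  also have "\<dots> = (\<lambda>x. 0)"
    using assms by (simp add: ops_apply_T_R smooth_ser_const smooth_monomial const_ser_def)
  finally show ?thesis .
qed

theorem equivalent_star_product_with_trivial_sun_cochains:
  "\<exists>C'. star_product P C' \<and> star_equiv C C' \<and> (\<forall>r is. r \<ge> 1 \<longrightarrow> sun_cochain C' r is = (\<lambda>x. 0))"
  using star_product_C' star_equiv_C' sun_cochain_C' by blast

end

theorem corollary1:
  fixes P :: "(real^'n::finite \<Rightarrow> real) \<Rightarrow> (real^'n \<Rightarrow> real) \<Rightarrow> real^'n \<Rightarrow> real"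
    and C :: "nat \<Rightarrow> (real^'n \<Rightarrow> real) \<Rightarrow> (real^'n \<Rightarrow> real) \<Rightarrow> real^'n \<Rightarrow> real"
  assumes "poisson_bracket P"
    and "star_product P C"
  shows "\<exists>C'. star_product P C' \<and> star_equiv C C' \<and>
           (\<forall>r is. r \<ge> 1 \<longrightarrow> sun_cochain C' r is = (\<lambda>x. 0))"
proof -
  interpret star_prod P C by unfold_locales (rule assms(2))
  interpret transport P C sun_op
    by unfold_locales (rule diff_ops_sun_op, rule sun_op_0, rule sun_cochain_eq_sun_op)
  show ?thesis by (rule equivalent_star_product_with_trivial_sun_cochains)
qed

end
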